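(* Assume $(H,T)$ satisfies the Standing Assumption (Assumption A). Then $H/T$, with the quotient topology, is a Hausdorff étale groupoid with composable pairs $$(H/T)^{(2)}=\{([\gamma],[\eta]):\exists\,\gamma'\in[\gamma],\eta'\in[\eta]\text{ with }(\gamma',\eta')\in H^{(2)}\},$$ composition $[\gamma][\eta]=\{\gamma'\eta':\gamma'\in[\gamma],\eta'\in[\eta],(\gamma',\eta')\in H^{(2)}\}$ (which is a single class, equal to $[\gamma'\eta']$ for any such composable $\gamma',\eta'$), inversion $[\gamma]^{-1}=[\gamma^{-1}]$, and range and source maps $r_{H/T}([\gamma])=[r_H(\gamma)]$, $s_{H/T}([\gamma])=[s_H(\gamma)]$.
   Context: Standing Assumption (Assumption A). $H$ is a Hausdorff étale groupoid with $H^{(0)}=T$, and $p:T\to X$ is an open quotient map such that each $T_x:=p^{-1}(x)$ is a compact Abelian group (so $T$ is a bundle of compact Abelian groups over $X$; this group structure is not the groupoid structure of $H$). Put $p_s=p\circ s$, $p_r=p\circ r$ on $H$. Write $t{\blacktriangleright}\eta$ (defined when $p(t)=p_r(\eta)$) for a left action and $\eta{\blacktriangleleft}t$ (defined when $p(t)=p_s(\eta)$) for a right action of the group bundle $T$ on $H$. Then: (1) these left and right actions are continuous, commute, and are free and proper, with (a) $t{\blacktriangleright}u=u{\blacktriangleleft}t$ for all $u\in H^{(0)}$, $t\in T$; (b) $r(t{\blacktriangleright}\gamma)=t{\blacktriangleright}r(\gamma)$ for $\gamma\in p_r^{-1}(p(t))$ and $s(\eta{\blacktriangleleft}t)=s(\eta){\blacktriangleleft}t$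 for $\eta\in p_s^{-1}(p(t))$; (2) there are continuous maps $\lambda:H\,{}_{p_s}\!*_p\,T\to T$, $(\eta,t)\mapsto\lambda_\eta(t)$, and $\rho:T\,{}_p\!*_{p_r}\,H\to T$, $(t,\eta)\mapsto\rho_\eta(t)$, such that for all $\gamma,\eta\in H$ and $t\in T$ (whenever defined): (a) $\eta{\blacktriangleleft}t=\lambda_\eta(t){\blacktriangleright}\eta$; (b) $t{\blacktriangleright}\eta=\eta{\blacktriangleleft}\rho_\eta(t)$; (c) $(\gamma\eta){\blacktriangleleft}t=(\gamma{\blacktriangleleft}\lambda_\eta(t))(\eta{\blacktriangleleft}t)$; (d) $t{\blacktriangleright}(\gamma\eta)=(t{\blacktriangleright}\gamma)(\rho_\gamma(t){\blacktriangleright}\eta)$; (e) $(\eta{\blacktriangleleft}t)^{-1}=t{\blacktriangleright}\eta^{-1}$; (f) $(t{\blacktriangleright}\eta)^{-1}=\eta^{-1}{\blacktriangleleft}t$. $H/T$ is the quotient of $H$ by the right $T$-action; $[\eta]=\{\eta{\blacktriangleleft}t:t\in T_{p_s(\eta)}\}$ (equivalently the left $T$-orbit of $\eta$). *)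

theory Defs
  imports "HOL-Analysis.Analysis"
begin

definition quotient_topology :: "'a topology \<Rightarrow> ('a \<Rightarrow> 'b) \<Rightarrow> 'b topology" where
  "quotient_topology X f =
     topology (\<lambda>U. U \<subseteq> f ` topspace X \<and> openin X {x \<in> topspace X. f x \<in> U})"

lemma istopology_quotient:
  "istopology (\<lambda>U. U \<subseteq> f ` topspace X \<and> openin X {x \<in> topspace X. f x \<in> U})"
proof -
  have i: "openin X {x \<in> topspace X. f x \<in> S \<inter> T}"
    if "openin X {x \<in> topspace X. f x \<in> S}" "openin X {x \<in> topspace X. f x \<in> T}" for S T
  proof -
    have "{x \<in> topspace X. f x \<in> S \<inter> T} = {x \<in> topspace X. f x \<in> S} \<inter> {x \<in> topspace X. f x \<in> T}"
      by auto
    then show ?thesis using that by (simp add: openin_Int)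
  qed
  have u: "openin X {x \<in> topspace X. f x \<in> \<Union>K}"
    if "\<forall>S\<in>K. openin X {x \<in> topspace X. f x \<in> S}" for K
  proof -
    have "{x \<in> topspace X. f x \<in> \<Union>K} = (\<Union>S\<in>K. {x \<in> topspace X. f x \<in> S})" by auto
    then show ?thesis using that by (metis (mono_tags, lifting) imageE openin_Union)
  qed
  show ?thesis unfolding istopology_def using i u by blast
qed

lemma openin_quotient_topology:
  "openin (quotient_topology X f) U \<longleftrightarrow>
     U \<subseteq> f ` topspace X \<and> openin X {x \<in> topspace X. f x \<in> U}"
  unfolding quotient_topology_def
  by (simp add: topology_inverse'[OF istopology_quotient])

definition groupoid ::
  "'a set \<Rightarrow> ('a \<times> 'a) set \<Rightarrow> ('a \<Rightarrow> 'a \<Rightarrow> 'a) \<Rightarrow> ('a \<Rightarrow> 'a) \<Rightarrow> ('a \<Rightarrow> 'a) \<Rightarrow> ('a \<Rightarrow> 'a) \<Rightarrow> bool"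
where
  "groupoid G G2 m i r s \<longleftrightarrow>
     G2 \<subseteq> G \<times> G \<and>
     (\<forall>g \<in> G. i g \<in> G \<and> i (i g) = g) \<and>
     (\<forall>g h. (g, h) \<in> G2 \<longrightarrow> m g h \<in> G) \<and>
     (\<forall>g h k. (g, h) \<in> G2 \<and> (h, k) \<in> G2 \<longrightarrow>
        (m g h, k) \<in> G2 \<and> (g, m h k) \<in> G2 \<and> m (m g h) k = m g (m h k)) \<and>
     (\<forall>g \<in> G. (i g, g) \<in> G2) \<and>
     (\<forall>g h. (g, h) \<in> G2 \<longrightarrow> m (i g) (m g h) = h \<and> m (m g h) (i h) = g) \<and>
     (\<forall>g \<in> G. r g = m g (i g) \<and> s g = m (i g) g)"

definition unit_space :: "'a set \<Rightarrow> ('a \<Rightarrow> 'a) \<Rightarrow> 'a set" where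
  "unit_space G r = r ` G"

definition topological_groupoid ::
  "'a topology \<Rightarrow> ('a \<times> 'a) set \<Rightarrow> ('a \<Rightarrow> 'a \<Rightarrow> 'a) \<Rightarrow> ('a \<Rightarrow> 'a) \<Rightarrow> ('a \<Rightarrow> 'a) \<Rightarrow> ('a \<Rightarrow> 'a) \<Rightarrow> bool"
where
  "topological_groupoid Top G2 m i r s \<longleftrightarrow>
     groupoid (topspace Top) G2 m i r s \<and>
     continuous_map (subtopology (prod_topology Top Top) G2) Top (\<lambda>(g, h). m g h) \<and>
     continuous_map Top Top i"

definition local_homeomorphism :: "'a topology \<Rightarrow> 'b topology \<Rightarrow> ('a \<Rightarrow> 'b) \<Rightarrow> bool" where
  "local_homeomorphism X Y f \<longleftrightarrow>
     f ` topspace X \<subseteq> topspace Y \<and>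
     (\<forall>x \<in> topspace X. \<exists>U. openin X U \<and> x \<in> U \<and> openin Y (f ` U) \<and>
        homeomorphic_map (subtopology X U) (subtopology Y (f ` U)) f)"

definition hausdorff_etale_groupoid ::
  "'a topology \<Rightarrow> ('a \<times> 'a) set \<Rightarrow> ('a \<Rightarrow> 'a \<Rightarrow> 'a) \<Rightarrow> ('a \<Rightarrow> 'a) \<Rightarrow> ('a \<Rightarrow> 'a) \<Rightarrow> ('a \<Rightarrow> 'a) \<Rightarrow> bool"
where
  "hausdorff_etale_groupoid Top G2 m i r s \<longleftrightarrow>
     topological_groupoid Top G2 m i r s \<and> Hausdorff_space Top \<and>
     local_homeomorphism Top Top r"

definition compact_abelian_group_bundle ::
  "'h topology \<Rightarrow> 'h set \<Rightarrow> 'x topology \<Rightarrow> ('h \<Rightarrow> 'x) \<Rightarrow>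
   ('h \<Rightarrow> 'h \<Rightarrow> 'h) \<Rightarrow> ('x \<Rightarrow> 'h) \<Rightarrow> ('h \<Rightarrow> 'h) \<Rightarrow> bool"
where
  "compact_abelian_group_bundle Y T X p tm te ti \<longleftrightarrow>
     T \<subseteq> topspace Y \<and> p ` T \<subseteq> topspace X \<and>
     (\<forall>x \<in> topspace X. te x \<in> T \<and> p (te x) = x) \<and>
     (\<forall>t \<in> T. ti t \<in> T \<and> p (ti t) = p t) \<and>
     (\<forall>t \<in> T. \<forall>u \<in> T. p t = p u \<longrightarrow> tm t u \<in> T \<and> p (tm t u) = p t) \<and>
     (\<forall>t \<in> T. \<forall>u \<in> T. \<forall>v \<in> T. p t = p u \<and> p u = p v \<longrightarrow> tm (tm t u) v = tm t (tm u v)) \<and>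
     (\<forall>t \<in> T. \<forall>u \<in> T. p t = p u \<longrightarrow> tm t u = tm u t) \<and>
     (\<forall>t \<in> T. tm (te (p t)) t = t) \<and>
     (\<forall>t \<in> T. tm (ti t) t = te (p t)) \<and>
     (\<forall>x \<in> topspace X. compactin Y {t \<in> T. p t = x}) \<and>
     continuous_map (subtopology (prod_topology Y Y) {(t, u). t \<in> T \<and> u \<in> T \<and> p t = p u})
        (subtopology Y T) (\<lambda>(t, u). tm t u) \<and>
     continuous_map (subtopology Y T) (subtopology Y T) ti \<and>
     continuous_map X (subtopology Y T) te"

text \<open>Parameters: the Hausdorff etale groupoid H (topology Htop, composable pairs H2,
  multiplication m, inversion i, range r, source s); T = H^(0); the open quotient map
  p : T \<rightarrow> X; the group bundle operations tm, te, ti on T; the left action lact t \<eta>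
  (t \<triangleright> \<eta>) and the right action ract \<eta> t (\<eta> \<triangleleft> t); the maps lam \<eta> t = \<lambda>_\<eta>(t) and
  rho \<eta> t = \<rho>_\<eta>(t).\<close>

definition standing_assumption ::
  "'h topology \<Rightarrow> ('h \<times> 'h) set \<Rightarrow> ('h \<Rightarrow> 'h \<Rightarrow> 'h) \<Rightarrow> ('h \<Rightarrow> 'h) \<Rightarrow> ('h \<Rightarrow> 'h) \<Rightarrow> ('h \<Rightarrow> 'h) \<Rightarrow>
   'x topology \<Rightarrow> ('h \<Rightarrow> 'x) \<Rightarrow> ('h \<Rightarrow> 'h \<Rightarrow> 'h) \<Rightarrow> ('x \<Rightarrow> 'h) \<Rightarrow> ('h \<Rightarrow> 'h) \<Rightarrow>
   ('h \<Rightarrow> 'h \<Rightarrow> 'h) \<Rightarrow> ('h \<Rightarrow> 'h \<Rightarrow> 'h) \<Rightarrow> ('h \<Rightarrow> 'h \<Rightarrow> 'h) \<Rightarrow> ('h \<Rightarrow> 'h \<Rightarrow> 'h) \<Rightarrow> bool"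
where
  "standing_assumption Htop H2 m i r s X p tm te ti lact ract lam rho \<longleftrightarrow>
   (let H = topspace Htop; T = unit_space H r;
        TopT = subtopology Htop T;
        LD = {(t, \<eta>). t \<in> T \<and> \<eta> \<in> H \<and> p t = p (r \<eta>)};
        RD = {(\<eta>, t). \<eta> \<in> H \<and> t \<in> T \<and> p t = p (s \<eta>)}
    in
     hausdorff_etale_groupoid Htop H2 m i r s \<and>
     quotient_map TopT X p \<and> open_map TopT X p \<and>
     compact_abelian_group_bundle Htop T X p tm te ti \<and>
     \<comment> \<open>left action of the group bundle T on H along p \<circ> r\<close>
     (\<forall>(t, \<eta>) \<in> LD. lact t \<eta> \<in> H \<and> p (r (lact t \<eta>)) = p t) \<and>
     (\<forall>\<eta> \<in> H. lact (te (p (r \<eta>))) \<eta> = \<eta>) \<and>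
     (\<forall>(t, \<eta>) \<in> LD. \<forall>u \<in> T. p u = p t \<longrightarrow> lact u (lact t \<eta>) = lact (tm u t) \<eta>) \<and>
     \<comment> \<open>right action of the group bundle T on H along p \<circ> s\<close>
     (\<forall>(\<eta>, t) \<in> RD. ract \<eta> t \<in> H \<and> p (s (ract \<eta> t)) = p t) \<and>
     (\<forall>\<eta> \<in> H. ract \<eta> (te (p (s \<eta>))) = \<eta>) \<and>
     (\<forall>(\<eta>, t) \<in> RD. \<forall>u \<in> T. p u = p t \<longrightarrow> ract (ract \<eta> t) u = ract \<eta> (tm t u)) \<and>
     \<comment> \<open>(1): continuous\<close>
     continuous_map (subtopology (prod_topology Htop Htop) LD) Htop (\<lambda>(t, \<eta>). lact t \<eta>) \<and>
     continuous_map (subtopology (prod_topology Htop Htop) RD) Htop (\<lambda>(\<eta>, t). ract \<eta> t) \<and>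
     \<comment> \<open>(1): the actions commute\<close>
     (\<forall>t \<in> T. \<forall>u \<in> T. \<forall>\<eta> \<in> H. p t = p (r \<eta>) \<and> p u = p (s \<eta>) \<longrightarrow>
        ract (lact t \<eta>) u = lact t (ract \<eta> u)) \<and>
     \<comment> \<open>(1): free\<close>
     (\<forall>(t, \<eta>) \<in> LD. lact t \<eta> = \<eta> \<longrightarrow> t = te (p t)) \<and>
     (\<forall>(\<eta>, t) \<in> RD. ract \<eta> t = \<eta> \<longrightarrow> t = te (p t)) \<and>
     \<comment> \<open>(1): proper\<close>
     proper_map (subtopology (prod_topology Htop Htop) LD) (prod_topology Htop Htop)
        (\<lambda>(t, \<eta>). (lact t \<eta>, \<eta>)) \<and>
     proper_map (subtopology (prod_topology Htop Htop) RD) (prod_topology Htop Htop)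
        (\<lambda>(\<eta>, t). (ract \<eta> t, \<eta>)) \<and>
     \<comment> \<open>(1)(a)\<close>
     (\<forall>u \<in> T. \<forall>t \<in> T. p t = p u \<longrightarrow> lact t u = ract u t) \<and>
     \<comment> \<open>(1)(b)\<close>
     (\<forall>(t, \<gamma>) \<in> LD. r (lact t \<gamma>) = lact t (r \<gamma>)) \<and>
     (\<forall>(\<eta>, t) \<in> RD. s (ract \<eta> t) = ract (s \<eta>) t) \<and>
     \<comment> \<open>(2): continuity of lambda and rho, and their values lie in the right fibres\<close>
     continuous_map (subtopology (prod_topology Htop Htop) RD) TopT (\<lambda>(\<eta>, t). lam \<eta> t) \<and>
     continuous_map (subtopology (prod_topology Htop Htop) LD) TopT (\<lambda>(t, \<eta>). rho \<eta> t) \<and>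
     (\<forall>(\<eta>, t) \<in> RD. p (lam \<eta> t) = p (r \<eta>)) \<and>
     (\<forall>(t, \<eta>) \<in> LD. p (rho \<eta> t) = p (s \<eta>)) \<and>
     \<comment> \<open>(2)(a), (2)(b)\<close>
     (\<forall>(\<eta>, t) \<in> RD. ract \<eta> t = lact (lam \<eta> t) \<eta>) \<and>
     (\<forall>(t, \<eta>) \<in> LD. lact t \<eta> = ract \<eta> (rho \<eta> t)) \<and>
     \<comment> \<open>(2)(c), (2)(d)\<close>
     (\<forall>(\<gamma>, \<eta>) \<in> H2. \<forall>t \<in> T. p t = p (s \<eta>) \<longrightarrow>
        ract (m \<gamma> \<eta>) t = m (ract \<gamma> (lam \<eta> t)) (ract \<eta> t)) \<and>
     (\<forall>(\<gamma>, \<eta>) \<in> H2. \<forall>t \<in> T. p t = p (r \<gamma>) \<longrightarrow>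
        lact t (m \<gamma> \<eta>) = m (lact t \<gamma>) (lact (rho \<gamma> t) \<eta>)) \<and>
     \<comment> \<open>(2)(e), (2)(f)\<close>
     (\<forall>(\<eta>, t) \<in> RD. i (ract \<eta> t) = lact t (i \<eta>)) \<and>
     (\<forall>(t, \<eta>) \<in> LD. i (lact t \<eta>) = ract (i \<eta>) t))"

definition orbit_class :: "'h set \<Rightarrow> ('h \<Rightarrow> 'x) \<Rightarrow> ('h \<Rightarrow> 'h) \<Rightarrow> ('h \<Rightarrow> 'h \<Rightarrow> 'h) \<Rightarrow> 'h \<Rightarrow> 'h set" where
  "orbit_class T p s ract \<eta> = {ract \<eta> t | t. t \<in> T \<and> p t = p (s \<eta>)}"

definition quot_composable :: "('h \<times> 'h) set \<Rightarrow> 'h set set \<Rightarrow> ('h set \<times> 'h set) set" where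
  "quot_composable H2 Q = {(A, B). A \<in> Q \<and> B \<in> Q \<and> (\<exists>\<gamma>' \<in> A. \<exists>\<eta>' \<in> B. (\<gamma>', \<eta>') \<in> H2)}"

definition quot_mult :: "('h \<times> 'h) set \<Rightarrow> ('h \<Rightarrow> 'h \<Rightarrow> 'h) \<Rightarrow> 'h set \<Rightarrow> 'h set \<Rightarrow> 'h set" where
  "quot_mult H2 m A B = {m \<gamma>' \<eta>' | \<gamma>' \<eta>'. \<gamma>' \<in> A \<and> \<eta>' \<in> B \<and> (\<gamma>', \<eta>') \<in> H2}"

text \<open>Inversion, range and source on H/T, computed from a representative; the theorem
  asserts they do not depend on the representative.\<close>

definition quot_lift :: "('h \<Rightarrow> 'h set) \<Rightarrow> ('h \<Rightarrow> 'h) \<Rightarrow> 'h set \<Rightarrow> 'h set" where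
  "quot_lift cls f A = cls (f (SOME \<gamma>. \<gamma> \<in> A))"

end

theory Submission
  imports Defs
begin

text \<open>The classes \<open>[\<eta>]\<close> are the orbits of a free proper action which is compatible with the
  groupoid operations up to the twists \<open>\<lambda>\<close> and \<open>\<rho>\<close>. Hence inversion, range and source map
  classes to classes, two classes are composable iff some representatives are, and by freeness
  the product of composable representatives does not depend on the choice. Since \<open>p\<close> is open,
  saturations of open sets are open, so \<open>H \<rightarrow> H/T\<close> is an open map; properness makes the orbit
  relation closed, whence \<open>H/T\<close> is Hausdorff. Properness and freeness also make
  \<open>(\<eta>, t) \<mapsto> (\<eta> \<triangleleft> t, \<eta>)\<close> a homeomorphism onto the orbit relation, so the element of \<open>T\<close> relating
  two points of one orbit depends continuously on them. This yields a continuous lift of the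
  quotient multiplication, and shows that the range map of \<open>H/T\<close> is injective near every class;
  being open, it is then a local homeomorphism.\<close>

section \<open>Topological preliminaries\<close>

lemma topspace_quotient_topology [simp]:
  "topspace (quotient_topology X f) = f ` topspace X"
proof
  show "topspace (quotient_topology X f) \<subseteq> f ` topspace X"
    using openin_quotient_topology[of X f "topspace (quotient_topology X f)"] by simp
  have "{x \<in> topspace X. f x \<in> f ` topspace X} = topspace X"
    by blast
  then have "openin (quotient_topology X f) (f ` topspace X)"
    by (simp add: openin_quotient_topology)
  then show "f ` topspace X \<subseteq> topspace (quotient_topology X f)"
    by (rule openin_subset)
qed

lemma quotient_map_quotient_topology: "quotient_map X (quotient_topology X f) f"
  unfolding quotient_map_def by (simp add: openin_quotient_topology)

lemma open_map_map_prod: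
  assumes f: "open_map X Y f" and g: "open_map X' Y' g"
  shows "open_map (prod_topology X X') (prod_topology Y Y') (map_prod f g)"
  unfolding open_map_def openin_prod_topology_alt
proof (intro allI impI)
  fix W a b
  assume W: "\<forall>x y. (x, y) \<in> W \<longrightarrow> (\<exists>U V. openin X U \<and> openin X' V \<and> x \<in> U \<and> y \<in> V \<and> U \<times> V \<subseteq> W)"
    and ab: "(a, b) \<in> map_prod f g ` W"
  from ab obtain x y where xy: "(x, y) \<in> W" "a = f x" "b = g y" by force
  with W obtain U V where UV: "openin X U" "openin X' V" "x \<in> U" "y \<in> V" "U \<times> V \<subseteq> W"
    by meson
  have "f ` U \<times> g ` V = map_prod f g ` (U \<times> V)"
    by (simp add: map_prod_surj_on)
  also have "\<dots> \<subseteq> map_prod f g ` W"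
    using UV(5) by (rule image_mono)
  finally have "f ` U \<times> g ` V \<subseteq> map_prod f g ` W" .
  moreover have "openin Y (f ` U)" "openin Y' (g ` V)"
    using f g UV(1,2) by (simp_all add: open_map_def)
  ultimately show "\<exists>U V. openin Y U \<and> openin Y' V \<and> a \<in> U \<and> b \<in> V \<and> U \<times> V \<subseteq> map_prod f g ` W"
    using UV(3,4) xy(2,3) by blast
qed

lemma open_map_fst_fibre_product:
  assumes g: "continuous_map Y Z g" and p: "open_map W Z p"
  shows "open_map (subtopology (prod_topology Y W) {(y, w). g y = p w}) Y fst"
  unfolding open_map_def
proof (intro allI impI)
  fix P assume "openin (subtopology (prod_topology Y W) {(y, w). g y = p w}) P"
  then obtain Ob where Ob: "openin (prod_topology Y W) Ob" and P: "P = Ob \<inter> {(y, w). g y = p w}"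
    by (auto simp: openin_subtopology)
  show "openin Y (fst ` P)"
    unfolding openin_subopen[of Y "fst ` P"]
  proof
    fix y assume "y \<in> fst ` P"
    then obtain w where yw: "(y, w) \<in> Ob" "g y = p w" using P by force
    with Ob obtain U V where UV: "openin Y U" "openin W V" "y \<in> U" "w \<in> V" "U \<times> V \<subseteq> Ob"
      unfolding openin_prod_topology_alt by meson
    define N where "N = {x \<in> U. g x \<in> p ` V}"
    have "openin Z (p ` V)" using p UV(2) by (simp add: open_map_def)
    then have "openin Y {x \<in> topspace Y. g x \<in> p ` V}"
      by (rule openin_continuous_map_preimage[OF g])
    moreover have "N = U \<inter> {x \<in> topspace Y. g x \<in> p ` V}"
      using openin_subset[OF UV(1)] unfolding N_def by blast
    ultimately have "openin Y N" using UV(1) by (simp add: openin_Int)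
    moreover have "y \<in> N" unfolding N_def using UV(3,4) yw(2) by blast
    moreover have "N \<subseteq> fst ` P"
    proof
      fix x assume "x \<in> N"
      then obtain v where "x \<in> U" "v \<in> V" "g x = p v" unfolding N_def by blast
      then have "(x, v) \<in> P" using UV(5) P by blast
      then show "x \<in> fst ` P" by force
    qed
    ultimately show "\<exists>N. openin Y N \<and> y \<in> N \<and> N \<subseteq> fst ` P" by blast
  qed
qed

lemma open_map_descend:
  assumes q: "continuous_map X Y q" "q ` topspace X = topspace Y"
    and h: "open_map X Z h" and fq: "\<And>x. x \<in> topspace X \<Longrightarrow> f (q x) = h x"
  shows "open_map Y Z f"
  unfolding open_map_def
proof (intro allI impI)
  fix W assume W: "openin Y W"
  have "f ` W = h ` {x \<in> topspace X. q x \<in> W}"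
  proof
    show "f ` W \<subseteq> h ` {x \<in> topspace X. q x \<in> W}"
    proof
      fix z assume "z \<in> f ` W"
      then obtain w where w: "w \<in> W" "z = f w" by blast
      moreover obtain x where "x \<in> topspace X" "w = q x"
        using w(1) openin_subset[OF W] q(2) by blast
      ultimately show "z \<in> h ` {x \<in> topspace X. q x \<in> W}" using fq by blast
    qed
    show "h ` {x \<in> topspace X. q x \<in> W} \<subseteq> f ` W" using fq by force
  qed
  moreover have "openin X {x \<in> topspace X. q x \<in> W}"
    using q(1) W by (rule openin_continuous_map_preimage)
  ultimately show "openin Z (f ` W)" using h by (simp add: open_map_def)
qed

lemma quotient_map_restriction_of_open_map:
  assumes "continuous_map X Y q" "open_map X Y q" "q ` topspace X = topspace Y"
  shows "quotient_map (subtopology X {x \<in> topspace X. q x \<in> S}) (subtopology Y S) q"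
proof (rule continuous_open_imp_quotient_map)
  show "continuous_map (subtopology X {x \<in> topspace X. q x \<in> S}) (subtopology Y S) q"
    using assms(1) by (auto simp: continuous_map_in_subtopology intro: continuous_map_from_subtopology)
  show "open_map (subtopology X {x \<in> topspace X. q x \<in> S}) (subtopology Y S) q"
    using assms(2) by (rule open_map_restriction) simp
  show "q ` topspace (subtopology X {x \<in> topspace X. q x \<in> S}) = topspace (subtopology Y S)"
    using assms(3) by auto
qed

lemma Hausdorff_space_open_map_image:
  assumes q: "open_map X Y q" and surj: "q ` topspace X = topspace Y"
    and closed: "closedin (prod_topology X X) {(x, y) \<in> topspace X \<times> topspace X. q x = q y}"
  shows "Hausdorff_space Y"
  unfolding Hausdorff_space_def
proof (intro allI impI)
  fix a b assume ab: "a \<in> topspace Y \<and> b \<in> topspace Y \<and> a \<noteq> b"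
  then obtain x y where xy: "x \<in> topspace X" "y \<in> topspace X" "a = q x" "b = q y"
    using surj by (metis imageE)
  let ?E = "{(x, y) \<in> topspace X \<times> topspace X. q x = q y}"
  have "openin (prod_topology X X) (topspace (prod_topology X X) - ?E)"
    using closed by (simp add: closedin_def)
  moreover have "(x, y) \<in> topspace (prod_topology X X) - ?E" using xy ab by auto
  ultimately obtain U V where UV: "openin X U" "openin X V" "x \<in> U" "y \<in> V"
      "U \<times> V \<subseteq> topspace (prod_topology X X) - ?E"
    unfolding openin_prod_topology_alt by meson
  have "disjnt (q ` U) (q ` V)"
    using UV(5) openin_subset[OF UV(1)] openin_subset[OF UV(2)] by (fastforce simp: disjnt_def)
  moreover have "openin Y (q ` U)" "openin Y (q ` V)"
    using q UV(1,2) by (simp_all add: open_map_def)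
  ultimately show "\<exists>U V. openin Y U \<and> openin Y V \<and> a \<in> U \<and> b \<in> V \<and> disjnt U V"
    using UV(3,4) xy(3,4) by blast
qed

lemma local_homeomorphism_imp_open_map:
  assumes "local_homeomorphism X Y f"
  shows "open_map X Y f"
  unfolding open_map_def
proof (intro allI impI)
  fix W assume W: "openin X W"
  show "openin Y (f ` W)"
    unfolding openin_subopen[of Y "f ` W"]
  proof
    fix y assume "y \<in> f ` W"
    then obtain x where x: "x \<in> W" "y = f x" by blast
    then obtain U where U: "openin X U" "x \<in> U" "openin Y (f ` U)"
        "homeomorphic_map (subtopology X U) (subtopology Y (f ` U)) f"
      using assms openin_subset[OF W] unfolding local_homeomorphism_def by blast
    have "openin (subtopology X U) (U \<inter> W)"
      using W by (rule openin_subtopology_Int2)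
    then have "openin (subtopology Y (f ` U)) (f ` (U \<inter> W))"
      using homeomorphic_imp_open_map[OF U(4)] by (simp add: open_map_def)
    then have "openin Y (f ` (U \<inter> W))"
      using U(3) by (rule openin_trans_full)
    then show "\<exists>V. openin Y V \<and> y \<in> V \<and> V \<subseteq> f ` W" using x U(2) by blast
  qed
qed

lemma local_homeomorphism_if_locally_injective:
  assumes cont: "continuous_map X Y f" and op: "open_map X Y f"
    and inj: "\<And>x. x \<in> topspace X \<Longrightarrow> \<exists>U. openin X U \<and> x \<in> U \<and> inj_on f U"
  shows "local_homeomorphism X Y f"
  unfolding local_homeomorphism_def
proof (intro conjI ballI)
  show "f ` topspace X \<subseteq> topspace Y"
    using cont by (rule continuous_map_image_subset_topspace)
  fix x assume "x \<in> topspace X"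
  then obtain U where U: "openin X U" "x \<in> U" "inj_on f U" using inj by blast
  have UX: "U \<subseteq> topspace X" using U(1) by (rule openin_subset)
  have fU: "openin Y (f ` U)" using op U(1) by (simp add: open_map_def)
  have "homeomorphic_map (subtopology X U) (subtopology Y (f ` U)) f"
  proof (rule bijective_open_imp_homeomorphic_map)
    show "continuous_map (subtopology X U) (subtopology Y (f ` U)) f"
      using cont by (auto simp: continuous_map_in_subtopology intro: continuous_map_from_subtopology)
    have "open_map (subtopology X U) Y f"
      using op U(1) by (rule open_map_from_subtopology)
    then show "open_map (subtopology X U) (subtopology Y (f ` U)) f"
      by (rule open_map_into_subtopology) auto
    show "f ` topspace (subtopology X U) = topspace (subtopology Y (f ` U))"
      using UX openin_subset[OF fU] by auto
    show "inj_on f (topspace (subtopology X U))"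
      using U(3) UX by (simp add: Int_absorb1)
  qed
  then show "\<exists>U. openin X U \<and> x \<in> U \<and> openin Y (f ` U) \<and>
      homeomorphic_map (subtopology X U) (subtopology Y (f ` U)) f"
    using U(1,2) fU by blast
qed

section \<open>Groupoids\<close>

locale abstract_groupoid =
  fixes G :: "'a set" and G2 :: "('a \<times> 'a) set" and m :: "'a \<Rightarrow> 'a \<Rightarrow> 'a"
    and i r s :: "'a \<Rightarrow> 'a"
  assumes groupoid: "groupoid G G2 m i r s"
begin

lemma composable_in: "(g, h) \<in> G2 \<Longrightarrow> g \<in> G \<and> h \<in> G"
  using groupoid unfolding groupoid_def by blast

lemma inv_in: "g \<in> G \<Longrightarrow> i g \<in> G"
  using groupoid unfolding groupoid_def by blast

lemma inv_inv: "g \<in> G \<Longrightarrow> i (i g) = g"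
  using groupoid unfolding groupoid_def by blast

lemma mult_in: "(g, h) \<in> G2 \<Longrightarrow> m g h \<in> G"
  using groupoid unfolding groupoid_def by blast

lemma assoc:
  "(g, h) \<in> G2 \<Longrightarrow> (h, k) \<in> G2 \<Longrightarrow>
     (m g h, k) \<in> G2 \<and> (g, m h k) \<in> G2 \<and> m (m g h) k = m g (m h k)"
  using groupoid unfolding groupoid_def by blast

lemma inv_composable: "g \<in> G \<Longrightarrow> (i g, g) \<in> G2"
  using groupoid unfolding groupoid_def by blast

lemma cancel: "(g, h) \<in> G2 \<Longrightarrow> m (i g) (m g h) = h \<and> m (m g h) (i h) = g"
  using groupoid unfolding groupoid_def by blast

lemma r_eq: "g \<in> G \<Longrightarrow> r g = m g (i g)"
  using groupoid unfolding groupoid_def by blast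

lemma s_eq: "g \<in> G \<Longrightarrow> s g = m (i g) g"
  using groupoid unfolding groupoid_def by blast

lemma composable_inv: "g \<in> G \<Longrightarrow> (g, i g) \<in> G2"
  using inv_composable[of "i g"] inv_in inv_inv by simp

lemma r_in: "g \<in> G \<Longrightarrow> r g \<in> G"
  using r_eq composable_inv mult_in by simp

lemma s_in: "g \<in> G \<Longrightarrow> s g \<in> G"
  using s_eq inv_composable mult_in by simp

lemma composable_imp_s_eq_r:
  assumes gh: "(g, h) \<in> G2"
  shows "s g = r h"
proof -
  have g: "g \<in> G" and h: "h \<in> G" using composable_in gh by auto
  have g_rh: "(g, r h) \<in> G2" "m g (r h) = g"
    using assoc[OF gh composable_inv[OF h]] cancel[OF gh] r_eq[OF h] by auto
  have "s g = m (m (i g) g) (r h)"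
    using assoc[OF inv_composable[OF g] g_rh(1)] g_rh(2) s_eq[OF g] by simp
  also have "\<dots> = m (s g) (m h (i h))"
    using s_eq[OF g] r_eq[OF h] by simp
  also have "\<dots> = m (m (s g) h) (i h)"
    using assoc[OF inv_composable[OF g] gh] assoc[of "s g" h "i h"] composable_inv[OF h] s_eq[OF g]
    by metis
  also have "m (s g) h = h"
    using assoc[OF inv_composable[OF g] gh] cancel[OF gh] s_eq[OF g] by simp
  finally show ?thesis using r_eq[OF h] by simp
qed

lemma composable_if_s_eq_r:
  assumes g: "g \<in> G" and h: "h \<in> G" and sr: "s g = r h"
  shows "(g, h) \<in> G2"
proof -
  have "(g, s g) \<in> G2"
    using assoc[OF composable_inv[OF g] inv_composable[OF g]] s_eq[OF g] by simp
  moreover have "(r h, h) \<in> G2"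
    using assoc[OF composable_inv[OF h] inv_composable[OF h]] r_eq[OF h] inv_inv[OF h] by auto
  moreover have "m (r h) h = h"
    using r_eq[OF h] assoc[OF composable_inv[OF h] inv_composable[OF h]] cancel[OF inv_composable[OF h]]
      inv_inv[OF h] by auto
  ultimately show ?thesis using assoc[of g "r h" h] sr by metis
qed

lemma s_mult:
  assumes gh: "(g, h) \<in> G2"
  shows "s (m g h) = s h"
proof -
  have h: "h \<in> G" using composable_in gh by auto
  have "(m g h, i h) \<in> G2" using assoc[OF gh composable_inv[OF h]] by simp
  then have "s (m g h) = r (i h)" by (rule composable_imp_s_eq_r)
  also have "\<dots> = s h" using r_eq[OF inv_in[OF h]] inv_inv[OF h] s_eq[OF h] by simp
  finally show ?thesis .
qed

lemma r_inv: "g \<in> G \<Longrightarrow> r (i g) = s g"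
  using r_eq[OF inv_in] inv_inv s_eq by simp

lemma s_inv: "g \<in> G \<Longrightarrow> s (i g) = r g"
  using s_eq[OF inv_in] inv_inv r_eq by simp

lemma s_unit: "u \<in> r ` G \<Longrightarrow> s u = u"
  using s_mult[OF composable_inv] r_eq s_inv by auto

lemma r_unit: "u \<in> r ` G \<Longrightarrow> r u = u"
proof -
  assume "u \<in> r ` G"
  then obtain g where g: "g \<in> G" "u = r g" by blast
  have "(i g, m g (i g)) \<in> G2"
    using assoc[OF inv_composable[OF g(1)] composable_inv[OF g(1)]] by simp
  then have "s (i g) = r (m g (i g))" by (rule composable_imp_s_eq_r)
  then show "r u = u" using g s_inv r_eq by simp
qed

lemma s_in_units: "g \<in> G \<Longrightarrow> s g \<in> r ` G"
  using r_inv inv_in by (metis image_eqI)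

end

section \<open>Actions of a bundle of groups on a groupoid\<close>

text \<open>The part of Assumption A that the proof uses; compactness of the fibres of \<open>p\<close> enters only
  through properness of the right action.\<close>

locale bundle_action_groupoid =
  fixes Htop :: "'h topology" and H2 :: "('h \<times> 'h) set" and m :: "'h \<Rightarrow> 'h \<Rightarrow> 'h"
    and i r s :: "'h \<Rightarrow> 'h" and T :: "'h set" and X :: "'x topology" and p :: "'h \<Rightarrow> 'x"
    and tm :: "'h \<Rightarrow> 'h \<Rightarrow> 'h" and te :: "'x \<Rightarrow> 'h" and ti :: "'h \<Rightarrow> 'h"
    and lact ract lam rho :: "'h \<Rightarrow> 'h \<Rightarrow> 'h"
  assumes etale: "hausdorff_etale_groupoid Htop H2 m i r s"
    and units: "T = r ` topspace Htop"
    and p_quotient: "quotient_map (subtopology Htop T) X p"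
    and p_open: "open_map (subtopology Htop T) X p"
    and te_in: "x \<in> topspace X \<Longrightarrow> te x \<in> T \<and> p (te x) = x"
    and ti_in: "t \<in> T \<Longrightarrow> ti t \<in> T \<and> p (ti t) = p t"
    and tm_in: "t \<in> T \<Longrightarrow> u \<in> T \<Longrightarrow> p t = p u \<Longrightarrow> tm t u \<in> T \<and> p (tm t u) = p t"
    and tm_assoc: "t \<in> T \<Longrightarrow> u \<in> T \<Longrightarrow> v \<in> T \<Longrightarrow> p t = p u \<Longrightarrow> p u = p v \<Longrightarrow>
      tm (tm t u) v = tm t (tm u v)"
    and tm_commute: "t \<in> T \<Longrightarrow> u \<in> T \<Longrightarrow> p t = p u \<Longrightarrow> tm t u = tm u t"
    and tm_te: "t \<in> T \<Longrightarrow> tm (te (p t)) t = t"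
    and tm_ti: "t \<in> T \<Longrightarrow> tm (ti t) t = te (p t)"
    and ract_in: "\<eta> \<in> topspace Htop \<Longrightarrow> t \<in> T \<Longrightarrow> p t = p (s \<eta>) \<Longrightarrow>
      ract \<eta> t \<in> topspace Htop \<and> p (s (ract \<eta> t)) = p t"
    and ract_te: "\<eta> \<in> topspace Htop \<Longrightarrow> ract \<eta> (te (p (s \<eta>))) = \<eta>"
    and ract_ract: "\<eta> \<in> topspace Htop \<Longrightarrow> t \<in> T \<Longrightarrow> p t = p (s \<eta>) \<Longrightarrow> u \<in> T \<Longrightarrow> p u = p t \<Longrightarrow>
      ract (ract \<eta> t) u = ract \<eta> (tm t u)"
    and ract_continuous: "continuous_map
      (subtopology (prod_topology Htop Htop) {(\<eta>, t). \<eta> \<in> topspace Htop \<and> t \<in> T \<and> p t = p (s \<eta>)})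
      Htop (\<lambda>(\<eta>, t). ract \<eta> t)"
    and ract_free: "\<eta> \<in> topspace Htop \<Longrightarrow> t \<in> T \<Longrightarrow> p t = p (s \<eta>) \<Longrightarrow> ract \<eta> t = \<eta> \<Longrightarrow>
      t = te (p t)"
    and ract_proper: "proper_map
      (subtopology (prod_topology Htop Htop) {(\<eta>, t). \<eta> \<in> topspace Htop \<and> t \<in> T \<and> p t = p (s \<eta>)})
      (prod_topology Htop Htop) (\<lambda>(\<eta>, t). (ract \<eta> t, \<eta>))"
    and s_ract: "\<eta> \<in> topspace Htop \<Longrightarrow> t \<in> T \<Longrightarrow> p t = p (s \<eta>) \<Longrightarrow> s (ract \<eta> t) = ract (s \<eta>) t"
    and lact_te: "\<eta> \<in> topspace Htop \<Longrightarrow> lact (te (p (r \<eta>))) \<eta> = \<eta>"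
    and lact_continuous: "continuous_map
      (subtopology (prod_topology Htop Htop) {(t, \<eta>). t \<in> T \<and> \<eta> \<in> topspace Htop \<and> p t = p (r \<eta>)})
      Htop (\<lambda>(t, \<eta>). lact t \<eta>)"
    and lact_unit: "u \<in> T \<Longrightarrow> t \<in> T \<Longrightarrow> p t = p u \<Longrightarrow> lact t u = ract u t"
    and r_lact: "t \<in> T \<Longrightarrow> \<eta> \<in> topspace Htop \<Longrightarrow> p t = p (r \<eta>) \<Longrightarrow> r (lact t \<eta>) = lact t (r \<eta>)"
    and lam_in: "\<eta> \<in> topspace Htop \<Longrightarrow> t \<in> T \<Longrightarrow> p t = p (s \<eta>) \<Longrightarrow>
      lam \<eta> t \<in> T \<and> p (lam \<eta> t) = p (r \<eta>)"
    and rho_in: "t \<in> T \<Longrightarrow> \<eta> \<in> topspace Htop \<Longrightarrow> p t = p (r \<eta>) \<Longrightarrow>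
      rho \<eta> t \<in> T \<and> p (rho \<eta> t) = p (s \<eta>)"
    and ract_eq_lact: "\<eta> \<in> topspace Htop \<Longrightarrow> t \<in> T \<Longrightarrow> p t = p (s \<eta>) \<Longrightarrow>
      ract \<eta> t = lact (lam \<eta> t) \<eta>"
    and lact_eq_ract: "t \<in> T \<Longrightarrow> \<eta> \<in> topspace Htop \<Longrightarrow> p t = p (r \<eta>) \<Longrightarrow>
      lact t \<eta> = ract \<eta> (rho \<eta> t)"
    and ract_mult: "(\<gamma>, \<eta>) \<in> H2 \<Longrightarrow> t \<in> T \<Longrightarrow> p t = p (s \<eta>) \<Longrightarrow>
      ract (m \<gamma> \<eta>) t = m (ract \<gamma> (lam \<eta> t)) (ract \<eta> t)"
    and inv_ract: "\<eta> \<in> topspace Htop \<Longrightarrow> t \<in> T \<Longrightarrow> p t = p (s \<eta>) \<Longrightarrow> i (ract \<eta> t) = lact t (i \<eta>)"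

lemma standing_assumption_imp_bundle_action_groupoid:
  assumes "standing_assumption Htop H2 m i r s X p tm te ti lact ract lam rho"
  shows "bundle_action_groupoid Htop H2 m i r s (unit_space (topspace Htop) r) X p tm te ti
    lact ract lam rho"
proof -
  let ?T = "unit_space (topspace Htop) r"
  let ?LD = "{(t, \<eta>). t \<in> ?T \<and> \<eta> \<in> topspace Htop \<and> p t = p (r \<eta>)}"
  let ?RD = "{(\<eta>, t). \<eta> \<in> topspace Htop \<and> t \<in> ?T \<and> p t = p (s \<eta>)}"
  note A = assms[unfolded standing_assumption_def Let_def compact_abelian_group_bundle_def
      Ball_def split_paired_All mem_Collect_eq case_prod_conv]
  have T_H: "?T \<subseteq> topspace Htop"
    using A by (elim conjE) assumption
  have "continuous_map (subtopology (prod_topology Htop Htop) ?RD) (subtopology Htop ?T)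
      (\<lambda>(\<eta>, t). lam \<eta> t)"
    using A by (elim conjE) assumption
  then have lam_T: "lam \<eta> t \<in> ?T" if "\<eta> \<in> topspace Htop" "t \<in> ?T" "p t = p (s \<eta>)" for \<eta> t
    using continuous_map_image_subset_topspace that T_H by (fastforce simp: image_subset_iff)
  have "continuous_map (subtopology (prod_topology Htop Htop) ?LD) (subtopology Htop ?T)
      (\<lambda>(t, \<eta>). rho \<eta> t)"
    using A by (elim conjE) assumption
  then have rho_T: "rho \<eta> t \<in> ?T" if "t \<in> ?T" "\<eta> \<in> topspace Htop" "p t = p (r \<eta>)" for \<eta> t
    using continuous_map_image_subset_topspace that T_H by (fastforce simp: image_subset_iff)
  \<comment> \<open>up to currying, every remaining axiom is a conjunct of the standing assumption\<close>
  show ?thesis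
    apply unfold_locales
    prefer 2 apply (simp add: unit_space_def)
    apply (insert A lam_T rho_T)
    apply (elim conjE, (assumption | meson))+
    done
qed

context bundle_action_groupoid
begin

abbreviation "H \<equiv> topspace Htop"
abbreviation "ract_dom \<equiv> {(\<eta>, t). \<eta> \<in> H \<and> t \<in> T \<and> p t = p (s \<eta>)}"
abbreviation "lact_dom \<equiv> {(t, \<eta>). t \<in> T \<and> \<eta> \<in> H \<and> p t = p (r \<eta>)}"
abbreviation "cls \<equiv> orbit_class T p s ract"

sublocale abstract_groupoid H H2 m i r s
  using etale by unfold_locales (simp add: hausdorff_etale_groupoid_def topological_groupoid_def)

lemma T_subset: "T \<subseteq> H"
  using units r_in by blast

lemma r_in_T: "\<gamma> \<in> H \<Longrightarrow> r \<gamma> \<in> T"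
  using units by blast

lemma s_in_T: "\<gamma> \<in> H \<Longrightarrow> s \<gamma> \<in> T"
  using units s_in_units by blast

lemma r_T: "u \<in> T \<Longrightarrow> r u = u"
  using units r_unit by blast

lemma s_T: "u \<in> T \<Longrightarrow> s u = u"
  using units s_unit by blast

lemma p_in: "t \<in> T \<Longrightarrow> p t \<in> topspace X"
  using quotient_imp_continuous_map[OF p_quotient] T_subset
  by (metis continuous_map_image_subset_topspace image_subset_iff inf.absorb_iff2 topspace_subtopology)

lemma tm_ti_right: "t \<in> T \<Longrightarrow> tm t (ti t) = te (p t)"
  using tm_commute[of t "ti t"] ti_in tm_ti by simp

lemma tm_te_right: "t \<in> T \<Longrightarrow> tm t (te (p t)) = t"
  using tm_commute[of t "te (p t)"] te_in[OF p_in] tm_te by simp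

lemma ract_cancel:
  assumes \<eta>: "\<eta> \<in> H" and a: "a \<in> T" "p a = p (s \<eta>)" and b: "b \<in> T" "p b = p (s \<eta>)"
    and eq: "ract \<eta> a = ract \<eta> b"
  shows "a = b"
proof -
  have tib: "ti b \<in> T" "p (ti b) = p b" using ti_in b by auto
  have "ract \<eta> (tm a (ti b)) = ract (ract \<eta> a) (ti b)"
    using ract_ract[OF \<eta> a tib(1)] tib a b by simp
  also have "\<dots> = ract \<eta> (tm b (ti b))"
    using eq ract_ract[OF \<eta> b tib(1)] tib by simp
  also have "\<dots> = \<eta>"
    using tm_ti_right[OF b(1)] b ract_te[OF \<eta>] by simp
  finally have "tm a (ti b) = te (p a)"
    using ract_free[OF \<eta>] tm_in[OF a(1) tib(1)] tib a b by simp
  then have "tm (tm a (ti b)) b = b"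
    using tm_te[OF b(1)] a b by simp
  moreover have "tm (tm a (ti b)) b = a"
    using tm_assoc[OF a(1) tib(1) b(1)] tm_ti[OF b(1)] tm_te_right[OF a(1)] tib a b by simp
  ultimately show ?thesis by simp
qed

lemma orbit_class_iff: "\<zeta> \<in> cls \<eta> \<longleftrightarrow> (\<exists>t \<in> T. p t = p (s \<eta>) \<and> \<zeta> = ract \<eta> t)"
  unfolding orbit_class_def by blast

lemma ract_in_orbit_class: "t \<in> T \<Longrightarrow> p t = p (s \<eta>) \<Longrightarrow> ract \<eta> t \<in> cls \<eta>"
  unfolding orbit_class_iff by blast

lemma self_in_orbit_class:
  assumes \<eta>: "\<eta> \<in> H"
  shows "\<eta> \<in> cls \<eta>"
  using ract_in_orbit_class[of "te (p (s \<eta>))" \<eta>] te_in[OF p_in[OF s_in_T[OF \<eta>]]] ract_te[OF \<eta>]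
  by simp

lemma orbit_class_subset: "\<eta> \<in> H \<Longrightarrow> cls \<eta> \<subseteq> H"
  unfolding orbit_class_def using ract_in by blast

lemma orbit_class_eq:
  assumes \<eta>: "\<eta> \<in> H" and \<zeta>: "\<zeta> \<in> cls \<eta>"
  shows "cls \<zeta> = cls \<eta>"
proof -
  obtain t where t: "t \<in> T" "p t = p (s \<eta>)" "\<zeta> = ract \<eta> t"
    using \<zeta> orbit_class_iff by blast
  have s\<zeta>: "p (s \<zeta>) = p t" using ract_in[OF \<eta> t(1,2)] t(3) by simp
  show ?thesis
  proof
    show "cls \<zeta> \<subseteq> cls \<eta>"
    proof
      fix x assume "x \<in> cls \<zeta>"
      then obtain u where u: "u \<in> T" "p u = p t" "x = ract \<zeta> u"
        using orbit_class_iff s\<zeta> by auto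
      have "x = ract \<eta> (tm t u)" using ract_ract[OF \<eta> t(1,2) u(1,2)] u t by simp
      then show "x \<in> cls \<eta>"
        using ract_in_orbit_class tm_in[OF t(1) u(1)] u t by simp
    qed
    show "cls \<eta> \<subseteq> cls \<zeta>"
    proof
      fix x assume "x \<in> cls \<eta>"
      then obtain v where v: "v \<in> T" "p v = p (s \<eta>)" "x = ract \<eta> v"
        using orbit_class_iff by auto
      have tit: "ti t \<in> T" "p (ti t) = p t" using ti_in t by auto
      have w: "tm (ti t) v \<in> T" "p (tm (ti t) v) = p t"
        using tm_in[OF tit(1) v(1)] tit v t by auto
      have "ract \<zeta> (tm (ti t) v) = ract \<eta> (tm t (tm (ti t) v))"
        using ract_ract[OF \<eta> t(1,2) w(1)] w t by simp
      also have "tm t (tm (ti t) v) = v"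
        using tm_assoc[OF t(1) tit(1) v(1)] tm_ti_right[OF t(1)] tm_te[OF v(1)] tit v t by simp
      finally have "x = ract \<zeta> (tm (ti t) v)" using v(3) by simp
      then show "x \<in> cls \<zeta>"
        using ract_in_orbit_class[OF w(1), of \<zeta>] w(2) s\<zeta> by simp
    qed
  qed
qed

lemma orbit_class_eq_iff:
  "\<eta> \<in> H \<Longrightarrow> \<zeta> \<in> H \<Longrightarrow> cls \<zeta> = cls \<eta> \<longleftrightarrow> \<zeta> \<in> cls \<eta>"
  using orbit_class_eq self_in_orbit_class by metis

lemma lact_in_orbit_class:
  "t \<in> T \<Longrightarrow> \<eta> \<in> H \<Longrightarrow> p t = p (r \<eta>) \<Longrightarrow> lact t \<eta> \<in> cls \<eta>"
  using ract_in_orbit_class rho_in lact_eq_ract by simp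

lemma r_ract:
  assumes \<eta>: "\<eta> \<in> H" and t: "t \<in> T" "p t = p (s \<eta>)"
  shows "r (ract \<eta> t) = ract (r \<eta>) (lam \<eta> t)"
proof -
  have l: "lam \<eta> t \<in> T" "p (lam \<eta> t) = p (r \<eta>)" using lam_in[OF \<eta> t] by auto
  have "r (ract \<eta> t) = lact (lam \<eta> t) (r \<eta>)"
    using ract_eq_lact[OF \<eta> t] r_lact[OF l(1) \<eta> l(2)] by simp
  also have "\<dots> = ract (r \<eta>) (lam \<eta> t)"
    using lact_unit[OF r_in_T[OF \<eta>] l(1)] l r_T[OF r_in_T[OF \<eta>]] by simp
  finally show ?thesis .
qed

lemma inv_in_orbit_class:
  assumes \<eta>: "\<eta> \<in> H" and \<zeta>: "\<zeta> \<in> cls \<eta>"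
  shows "i \<zeta> \<in> cls (i \<eta>)"
proof -
  obtain t where t: "t \<in> T" "p t = p (s \<eta>)" "\<zeta> = ract \<eta> t" using \<zeta> orbit_class_iff by blast
  then show ?thesis
    using inv_ract[OF \<eta> t(1,2)] lact_in_orbit_class[OF t(1) inv_in[OF \<eta>]] r_inv[OF \<eta>] by simp
qed

lemma s_in_orbit_class:
  assumes \<eta>: "\<eta> \<in> H" and \<zeta>: "\<zeta> \<in> cls \<eta>"
  shows "s \<zeta> \<in> cls (s \<eta>)"
proof -
  obtain t where t: "t \<in> T" "p t = p (s \<eta>)" "\<zeta> = ract \<eta> t" using \<zeta> orbit_class_iff by blast
  then show ?thesis
    using s_ract[OF \<eta> t(1,2)] ract_in_orbit_class[OF t(1)] s_T[OF s_in_T[OF \<eta>]] by simp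
qed

lemma r_in_orbit_class:
  assumes \<eta>: "\<eta> \<in> H" and \<zeta>: "\<zeta> \<in> cls \<eta>"
  shows "r \<zeta> \<in> cls (r \<eta>)"
proof -
  obtain t where t: "t \<in> T" "p t = p (s \<eta>)" "\<zeta> = ract \<eta> t" using \<zeta> orbit_class_iff by blast
  then show ?thesis
    using r_ract[OF \<eta> t(1,2)] ract_in_orbit_class lam_in[OF \<eta> t(1,2)] s_T[OF r_in_T[OF \<eta>]] by simp
qed

lemma quot_lift_orbit_class:
  assumes f_in: "\<And>\<eta>. \<eta> \<in> H \<Longrightarrow> f \<eta> \<in> H"
    and f_orbit: "\<And>\<eta> \<zeta>. \<eta> \<in> H \<Longrightarrow> \<zeta> \<in> cls \<eta> \<Longrightarrow> f \<zeta> \<in> cls (f \<eta>)"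
    and \<eta>: "\<eta> \<in> H"
  shows "quot_lift cls f (cls \<eta>) = cls (f \<eta>)"
proof -
  let ?\<zeta> = "SOME \<zeta>. \<zeta> \<in> cls \<eta>"
  have \<zeta>: "?\<zeta> \<in> cls \<eta>" using self_in_orbit_class[OF \<eta>] by (rule someI)
  then have "?\<zeta> \<in> H" using orbit_class_subset[OF \<eta>] by blast
  then show ?thesis
    unfolding quot_lift_def using orbit_class_eq f_in f_orbit \<eta> \<zeta> by metis
qed

lemma quot_lift_inv: "\<eta> \<in> H \<Longrightarrow> quot_lift cls i (cls \<eta>) = cls (i \<eta>)"
  using quot_lift_orbit_class inv_in inv_in_orbit_class by blast

lemma quot_lift_r: "\<eta> \<in> H \<Longrightarrow> quot_lift cls r (cls \<eta>) = cls (r \<eta>)"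
  using quot_lift_orbit_class r_in r_in_orbit_class by blast

lemma quot_lift_s: "\<eta> \<in> H \<Longrightarrow> quot_lift cls s (cls \<eta>) = cls (s \<eta>)"
  using quot_lift_orbit_class s_in s_in_orbit_class by blast

section \<open>The orbit space as a groupoid\<close>

abbreviation "Q \<equiv> cls ` H"
abbreviation "Q2 \<equiv> quot_composable H2 Q"

lemma orbit_class_of_mem:
  assumes "A \<in> Q" "\<gamma> \<in> A"
  shows "\<gamma> \<in> H \<and> A = cls \<gamma>"
proof -
  obtain \<eta> where "\<eta> \<in> H" "A = cls \<eta>" using assms(1) by blast
  then show ?thesis using assms(2) orbit_class_eq orbit_class_subset by blast
qed

lemma quot_mult_orbit_class:
  assumes \<gamma>\<eta>: "(\<gamma>, \<eta>) \<in> H2"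
  shows "quot_mult H2 m (cls \<gamma>) (cls \<eta>) = cls (m \<gamma> \<eta>)"
proof
  have \<gamma>: "\<gamma> \<in> H" and \<eta>: "\<eta> \<in> H" using composable_in \<gamma>\<eta> by auto
  have sr: "s \<gamma> = r \<eta>" using composable_imp_s_eq_r \<gamma>\<eta> .
  show "quot_mult H2 m (cls \<gamma>) (cls \<eta>) \<subseteq> cls (m \<gamma> \<eta>)"
  proof
    fix x assume "x \<in> quot_mult H2 m (cls \<gamma>) (cls \<eta>)"
    then obtain \<gamma>' \<eta>' where x: "x = m \<gamma>' \<eta>'" "\<gamma>' \<in> cls \<gamma>" "\<eta>' \<in> cls \<eta>" "(\<gamma>', \<eta>') \<in> H2"
      unfolding quot_mult_def by blast
    obtain a where a: "a \<in> T" "p a = p (s \<gamma>)" "\<gamma>' = ract \<gamma> a" using x(2) orbit_class_iff by blast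
    obtain b where b: "b \<in> T" "p b = p (s \<eta>)" "\<eta>' = ract \<eta> b" using x(3) orbit_class_iff by blast
    have l: "lam \<eta> b \<in> T" "p (lam \<eta> b) = p (s \<gamma>)" using lam_in[OF \<eta> b(1,2)] sr by auto
    have "ract (s \<gamma>) a = ract (s \<gamma>) (lam \<eta> b)"
      using composable_imp_s_eq_r[OF x(4)] s_ract[OF \<gamma> a(1,2)] r_ract[OF \<eta> b(1,2)] a(3) b(3) sr
      by simp
    then have "a = lam \<eta> b"
      using ract_cancel[OF s_in[OF \<gamma>] a(1) _ l(1)] a(2) l(2) s_T[OF s_in_T[OF \<gamma>]] by simp
    then have "x = ract (m \<gamma> \<eta>) b" using ract_mult[OF \<gamma>\<eta> b(1,2)] x(1) a(3) b(3) by simp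
    then show "x \<in> cls (m \<gamma> \<eta>)" using ract_in_orbit_class[OF b(1)] b(2) s_mult[OF \<gamma>\<eta>] by simp
  qed
  show "cls (m \<gamma> \<eta>) \<subseteq> quot_mult H2 m (cls \<gamma>) (cls \<eta>)"
  proof
    fix x assume "x \<in> cls (m \<gamma> \<eta>)"
    then obtain b where b: "b \<in> T" "p b = p (s \<eta>)" "x = ract (m \<gamma> \<eta>) b"
      using orbit_class_iff s_mult[OF \<gamma>\<eta>] by auto
    have l: "lam \<eta> b \<in> T" "p (lam \<eta> b) = p (s \<gamma>)" using lam_in[OF \<eta> b(1,2)] sr by auto
    have \<gamma>': "ract \<gamma> (lam \<eta> b) \<in> cls \<gamma>" using ract_in_orbit_class[OF l] .
    have \<eta>': "ract \<eta> b \<in> cls \<eta>" using ract_in_orbit_class[OF b(1,2)] .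
    have "s (ract \<gamma> (lam \<eta> b)) = r (ract \<eta> b)"
      using s_ract[OF \<gamma> l] r_ract[OF \<eta> b(1,2)] sr by simp
    then have "(ract \<gamma> (lam \<eta> b), ract \<eta> b) \<in> H2"
      using composable_if_s_eq_r orbit_class_subset[OF \<gamma>] orbit_class_subset[OF \<eta>] \<gamma>' \<eta>' by blast
    then show "x \<in> quot_mult H2 m (cls \<gamma>) (cls \<eta>)"
      unfolding quot_mult_def using ract_mult[OF \<gamma>\<eta> b(1,2)] b(3) \<gamma>' \<eta>' by blast
  qed
qed

text \<open>Translating \<open>\<eta>\<close> on the left by the inverse of the element that carries \<open>s \<gamma>\<close> to
  \<open>r \<eta>\<close> makes it composable with \<open>\<gamma>\<close>.\<close>

lemma composable_in_orbit_class:
  assumes \<gamma>: "\<gamma> \<in> H" and \<eta>: "\<eta> \<in> H" and sr: "cls (s \<gamma>) = cls (r \<eta>)"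
  obtains \<eta>' where "\<eta>' \<in> cls \<eta>" "(\<gamma>, \<eta>') \<in> H2"
proof -
  have s\<gamma>: "s \<gamma> \<in> H" "s (s \<gamma>) = s \<gamma>" using s_in[OF \<gamma>] s_T[OF s_in_T[OF \<gamma>]] by auto
  have "r \<eta> \<in> cls (s \<gamma>)" using sr self_in_orbit_class[OF r_in[OF \<eta>]] by simp
  then obtain t where t: "t \<in> T" "p t = p (s \<gamma>)" "r \<eta> = ract (s \<gamma>) t"
    using orbit_class_iff s\<gamma>(2) by auto
  have prt: "p (r \<eta>) = p t" using ract_in[OF s\<gamma>(1) t(1)] t s\<gamma>(2) s_T[OF r_in_T[OF \<eta>]] by simp
  have ti: "ti t \<in> T" "p (ti t) = p (r \<eta>)" using ti_in[OF t(1)] prt by auto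
  have "r (lact (ti t) \<eta>) = ract (r \<eta>) (ti t)"
    using r_lact[OF ti(1) \<eta> ti(2)] lact_unit[OF r_in_T[OF \<eta>] ti(1)] ti r_T[OF r_in_T[OF \<eta>]] by simp
  also have "\<dots> = ract (s \<gamma>) (tm t (ti t))"
    using ract_ract[OF s\<gamma>(1) t(1) _ ti(1)] ti prt t s\<gamma>(2) by simp
  also have "\<dots> = s \<gamma>" using tm_ti_right[OF t(1)] t ract_te[OF s\<gamma>(1)] s\<gamma>(2) by simp
  finally have r\<eta>': "r (lact (ti t) \<eta>) = s \<gamma>" .
  have \<eta>': "lact (ti t) \<eta> \<in> cls \<eta>"
    by (rule lact_in_orbit_class[OF ti(1) \<eta> ti(2)])
  then have "(\<gamma>, lact (ti t) \<eta>) \<in> H2"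
    using composable_if_s_eq_r[OF \<gamma> _ r\<eta>'[symmetric]] orbit_class_subset[OF \<eta>] by blast
  with \<eta>' show thesis by (rule that)
qed

lemma orbit_classes_composable: "(\<gamma>, \<eta>) \<in> H2 \<Longrightarrow> (cls \<gamma>, cls \<eta>) \<in> Q2"
  unfolding quot_composable_def using composable_in self_in_orbit_class by blast

lemma quot_composableE:
  assumes "(A, B) \<in> Q2"
  obtains \<gamma> \<eta> where "(\<gamma>, \<eta>) \<in> H2" "A = cls \<gamma>" "B = cls \<eta>"
proof -
  obtain \<gamma> \<eta> where AB: "A \<in> Q" "B \<in> Q" "\<gamma> \<in> A" "\<eta> \<in> B" "(\<gamma>, \<eta>) \<in> H2"
    using assms unfolding quot_composable_def by blast
  then have "A = cls \<gamma>" "B = cls \<eta>"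
    using orbit_class_of_mem by blast+
  with AB(5) show thesis by (rule that)
qed

lemma quot_composable_iff:
  assumes \<gamma>: "\<gamma> \<in> H" and \<eta>: "\<eta> \<in> H"
  shows "(cls \<gamma>, cls \<eta>) \<in> Q2 \<longleftrightarrow> cls (s \<gamma>) = cls (r \<eta>)"
proof
  assume "(cls \<gamma>, cls \<eta>) \<in> Q2"
  then obtain \<gamma>' \<eta>' where \<gamma>': "\<gamma>' \<in> cls \<gamma>" and \<eta>': "\<eta>' \<in> cls \<eta>" and "(\<gamma>', \<eta>') \<in> H2"
    unfolding quot_composable_def by blast
  then have "s \<gamma>' = r \<eta>'" by (simp add: composable_imp_s_eq_r)
  moreover have "cls (s \<gamma>') = cls (s \<gamma>)"
    using orbit_class_eq[OF s_in[OF \<gamma>] s_in_orbit_class[OF \<gamma> \<gamma>']] .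
  moreover have "cls (r \<eta>') = cls (r \<eta>)"
    using orbit_class_eq[OF r_in[OF \<eta>] r_in_orbit_class[OF \<eta> \<eta>']] .
  ultimately show "cls (s \<gamma>) = cls (r \<eta>)" by simp
next
  assume "cls (s \<gamma>) = cls (r \<eta>)"
  then obtain \<eta>' where \<eta>': "\<eta>' \<in> cls \<eta>" and \<gamma>\<eta>': "(\<gamma>, \<eta>') \<in> H2"
    using composable_in_orbit_class \<gamma> \<eta> by blast
  have "(cls \<gamma>, cls \<eta>') \<in> Q2" using orbit_classes_composable[OF \<gamma>\<eta>'] .
  then show "(cls \<gamma>, cls \<eta>) \<in> Q2" using orbit_class_eq[OF \<eta> \<eta>'] by simp
qed

lemma quot_mult_eq:
  assumes "(A, B) \<in> Q2" "\<gamma>' \<in> A" "\<eta>' \<in> B" "(\<gamma>', \<eta>') \<in> H2"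
  shows "quot_mult H2 m A B = cls (m \<gamma>' \<eta>')"
proof -
  have "A \<in> Q" "B \<in> Q" using assms(1) unfolding quot_composable_def by auto
  then have "A = cls \<gamma>'" "B = cls \<eta>'" using assms(2,3) orbit_class_of_mem by blast+
  then show ?thesis using quot_mult_orbit_class[OF assms(4)] by simp
qed

lemma quot_mult_assoc:
  assumes AB: "(A, B) \<in> Q2" and BC: "(B, C) \<in> Q2"
  shows "(quot_mult H2 m A B, C) \<in> Q2 \<and> (A, quot_mult H2 m B C) \<in> Q2 \<and>
    quot_mult H2 m (quot_mult H2 m A B) C = quot_mult H2 m A (quot_mult H2 m B C)"
proof -
  obtain \<gamma> \<eta> where c: "(\<gamma>, \<eta>) \<in> H2" "A = cls \<gamma>" "B = cls \<eta>"
    using AB by (rule quot_composableE)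
  have \<eta>: "\<eta> \<in> H" using composable_in c(1) by auto
  obtain \<zeta> where \<zeta>: "\<zeta> \<in> H" "C = cls \<zeta>" using BC unfolding quot_composable_def by blast
  have "cls (s \<eta>) = cls (r \<zeta>)" using BC quot_composable_iff[OF \<eta> \<zeta>(1)] c(3) \<zeta>(2) by simp
  then obtain \<zeta>' where \<zeta>': "\<zeta>' \<in> cls \<zeta>" "(\<eta>, \<zeta>') \<in> H2"
    using composable_in_orbit_class \<eta> \<zeta>(1) by blast
  have C: "C = cls \<zeta>'" using orbit_class_eq[OF \<zeta>(1) \<zeta>'(1)] \<zeta>(2) by simp
  note a = assoc[OF c(1) \<zeta>'(2)]
  show ?thesis
    using a c C quot_mult_orbit_class quot_mult_orbit_class[OF \<zeta>'(2)] orbit_classes_composable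
    by simp
qed

lemma groupoid_orbit_space:
  "groupoid Q Q2 (quot_mult H2 m) (quot_lift cls i) (quot_lift cls r) (quot_lift cls s)"
  unfolding groupoid_def
proof (intro conjI allI impI ballI)
  show "Q2 \<subseteq> Q \<times> Q" unfolding quot_composable_def by blast
next
  fix A assume "A \<in> Q"
  then obtain \<gamma> where \<gamma>: "\<gamma> \<in> H" "A = cls \<gamma>" by blast
  show "quot_lift cls i A \<in> Q" using \<gamma> quot_lift_inv inv_in by simp
  show "quot_lift cls i (quot_lift cls i A) = A" using \<gamma> quot_lift_inv inv_in inv_inv by simp
  show "(quot_lift cls i A, A) \<in> Q2" using \<gamma> quot_lift_inv orbit_classes_composable inv_composable by simp
  show "quot_lift cls r A = quot_mult H2 m A (quot_lift cls i A)"
    using \<gamma> quot_lift_inv quot_lift_r quot_mult_orbit_class composable_inv r_eq by simp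
  show "quot_lift cls s A = quot_mult H2 m (quot_lift cls i A) A"
    using \<gamma> quot_lift_inv quot_lift_s quot_mult_orbit_class inv_composable s_eq by simp
next
  fix A B assume "(A, B) \<in> Q2"
  then obtain \<gamma> \<eta> where c: "(\<gamma>, \<eta>) \<in> H2" "A = cls \<gamma>" "B = cls \<eta>" by (rule quot_composableE)
  have \<gamma>: "\<gamma> \<in> H" and \<eta>: "\<eta> \<in> H" using composable_in c by auto
  show "quot_mult H2 m A B \<in> Q" using c quot_mult_orbit_class mult_in by simp
  show "quot_mult H2 m (quot_lift cls i A) (quot_mult H2 m A B) = B"
    using c quot_mult_orbit_class quot_lift_inv[OF \<gamma>] assoc[OF inv_composable[OF \<gamma>] c(1)] cancel by simp
  show "quot_mult H2 m (quot_mult H2 m A B) (quot_lift cls i B) = A"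
    using c quot_mult_orbit_class quot_lift_inv[OF \<eta>] assoc[OF c(1) composable_inv[OF \<eta>]] cancel by simp
next
  fix A B C assume "(A, B) \<in> Q2 \<and> (B, C) \<in> Q2"
  then show "(quot_mult H2 m A B, C) \<in> Q2" "(A, quot_mult H2 m B C) \<in> Q2"
    "quot_mult H2 m (quot_mult H2 m A B) C = quot_mult H2 m A (quot_mult H2 m B C)"
    using quot_mult_assoc by blast+
qed

section \<open>The orbit space as a Hausdorff etale groupoid\<close>

abbreviation "Qtop \<equiv> quotient_topology Htop cls"
abbreviation "HH \<equiv> prod_topology Htop Htop"
abbreviation "orbit_rel \<equiv> {(a, b) \<in> H \<times> H. cls a = cls b}"

lemma topspace_Qtop: "topspace Qtop = Q"
  by simp

lemma quotient_map_cls: "quotient_map Htop Qtop cls"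
  by (rule quotient_map_quotient_topology)

lemma continuous_map_cls: "continuous_map Htop Qtop cls"
  using quotient_map_cls by (rule quotient_imp_continuous_map)

lemma continuous_map_mult: "continuous_map (subtopology HH H2) Htop (\<lambda>(g, h). m g h)"
  using etale by (simp add: hausdorff_etale_groupoid_def topological_groupoid_def)

lemma continuous_map_inv: "continuous_map Htop Htop i"
  using etale by (simp add: hausdorff_etale_groupoid_def topological_groupoid_def)

lemma continuous_map_r: "continuous_map Htop Htop r"
proof -
  have "continuous_map Htop HH (\<lambda>g. (g, i g))"
    using continuous_map_id[unfolded id_def] continuous_map_inv by (rule continuous_map_pairedI)
  then have "continuous_map Htop (subtopology HH H2) (\<lambda>g. (g, i g))"
    using composable_inv by (simp add: continuous_map_in_subtopology)
  from continuous_map_compose[OF this continuous_map_mult]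
  have "continuous_map Htop Htop (\<lambda>g. m g (i g))" by (simp add: o_def)
  then show ?thesis by (rule continuous_map_eq) (simp add: r_eq)
qed

lemma continuous_map_s: "continuous_map Htop Htop s"
proof -
  have "continuous_map Htop HH (\<lambda>g. (i g, g))"
    using continuous_map_inv continuous_map_id[unfolded id_def] by (rule continuous_map_pairedI)
  then have "continuous_map Htop (subtopology HH H2) (\<lambda>g. (i g, g))"
    using inv_composable by (simp add: continuous_map_in_subtopology)
  from continuous_map_compose[OF this continuous_map_mult]
  have "continuous_map Htop Htop (\<lambda>g. m (i g) g)" by (simp add: o_def)
  then show ?thesis by (rule continuous_map_eq) (simp add: s_eq)
qed

lemma open_map_fst_ract_dom: "open_map (subtopology HH ract_dom) Htop fst"
proof -
  have "continuous_map Htop (subtopology Htop T) s"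
    using continuous_map_s s_in_T by (simp add: continuous_map_in_subtopology)
  from continuous_map_compose[OF this quotient_imp_continuous_map[OF p_quotient]]
  have "continuous_map Htop X (\<lambda>\<eta>. p (s \<eta>))" by (simp add: o_def)
  from open_map_fst_fibre_product[OF this p_open]
  have "open_map (subtopology (prod_topology Htop (subtopology Htop T)) {(\<eta>, t). p (s \<eta>) = p t})
      Htop fst" .
  moreover have "H \<times> T \<inter> {(\<eta>, t). p (s \<eta>) = p t} = ract_dom" by auto
  ultimately show ?thesis by (simp add: prod_topology_subtopology subtopology_subtopology)
qed

lemma saturation_eq:
  assumes "U \<subseteq> H"
  shows "{x \<in> H. cls x \<in> cls ` U} = fst ` {(\<eta>, t) \<in> ract_dom. ract \<eta> t \<in> U}"
proof
  show "{x \<in> H. cls x \<in> cls ` U} \<subseteq> fst ` {(\<eta>, t) \<in> ract_dom. ract \<eta> t \<in> U}"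
  proof
    fix x assume "x \<in> {x \<in> H. cls x \<in> cls ` U}"
    then obtain u where x: "x \<in> H" and u: "u \<in> U" "cls x = cls u" by blast
    then have "u \<in> cls x" using self_in_orbit_class assms by blast
    then obtain t where "t \<in> T" "p t = p (s x)" "u = ract x t" using orbit_class_iff by blast
    then have "(x, t) \<in> {(\<eta>, t) \<in> ract_dom. ract \<eta> t \<in> U}" using x u by simp
    then show "x \<in> fst ` {(\<eta>, t) \<in> ract_dom. ract \<eta> t \<in> U}" by force
  qed
  show "fst ` {(\<eta>, t) \<in> ract_dom. ract \<eta> t \<in> U} \<subseteq> {x \<in> H. cls x \<in> cls ` U}"
  proof
    fix x assume "x \<in> fst ` {(\<eta>, t) \<in> ract_dom. ract \<eta> t \<in> U}"
    then obtain t where t: "x \<in> H" "t \<in> T" "p t = p (s x)" "ract x t \<in> U" by force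
    then have "cls (ract x t) = cls x"
      using orbit_class_eq ract_in_orbit_class by blast
    then show "x \<in> {x \<in> H. cls x \<in> cls ` U}" using t by (metis (mono_tags, lifting) image_eqI mem_Collect_eq)
  qed
qed

lemma openin_saturation:
  assumes U: "openin Htop U"
  shows "openin Htop {x \<in> H. cls x \<in> cls ` U}"
proof -
  have "openin (subtopology HH ract_dom) {z \<in> topspace (subtopology HH ract_dom). (\<lambda>(\<eta>, t). ract \<eta> t) z \<in> U}"
    using ract_continuous U by (rule openin_continuous_map_preimage)
  moreover have "{z \<in> topspace (subtopology HH ract_dom). (\<lambda>(\<eta>, t). ract \<eta> t) z \<in> U}
      = {(\<eta>, t) \<in> ract_dom. ract \<eta> t \<in> U}"
    using T_subset by auto
  ultimately have "openin Htop (fst ` {(\<eta>, t) \<in> ract_dom. ract \<eta> t \<in> U})"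
    using open_map_fst_ract_dom by (simp add: open_map_def)
  then show ?thesis using saturation_eq[OF openin_subset[OF U]] by simp
qed

lemma open_map_cls: "open_map Htop Qtop cls"
  unfolding open_map_def openin_quotient_topology
  using openin_saturation openin_subset by blast

lemma orbit_rel_eq_image: "orbit_rel = (\<lambda>(\<eta>, t). (ract \<eta> t, \<eta>)) ` ract_dom"
proof
  show "orbit_rel \<subseteq> (\<lambda>(\<eta>, t). (ract \<eta> t, \<eta>)) ` ract_dom"
  proof
    fix z assume "z \<in> orbit_rel"
    then obtain a b where z: "z = (a, b)" "a \<in> H" "b \<in> H" "cls a = cls b" by blast
    then have "a \<in> cls b" using orbit_class_eq_iff by simp
    then obtain t where "t \<in> T" "p t = p (s b)" "a = ract b t"
      using orbit_class_iff by blast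
    then show "z \<in> (\<lambda>(\<eta>, t). (ract \<eta> t, \<eta>)) ` ract_dom" using z(1,3) by force
  qed
  show "(\<lambda>(\<eta>, t). (ract \<eta> t, \<eta>)) ` ract_dom \<subseteq> orbit_rel"
  proof
    fix z assume "z \<in> (\<lambda>(\<eta>, t). (ract \<eta> t, \<eta>)) ` ract_dom"
    then obtain \<eta> t where z: "z = (ract \<eta> t, \<eta>)" "\<eta> \<in> H" "t \<in> T" "p t = p (s \<eta>)"
      by auto
    then show "z \<in> orbit_rel"
      using ract_in[OF z(2-4)] orbit_class_eq[OF z(2) ract_in_orbit_class[OF z(3,4)]] by simp
  qed
qed

lemma closedin_orbit_rel: "closedin HH orbit_rel"
proof -
  have "closed_map (subtopology HH ract_dom) HH (\<lambda>(\<eta>, t). (ract \<eta> t, \<eta>))"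
    by (rule proper_imp_closed_map[OF ract_proper])
  then have "closedin HH ((\<lambda>(\<eta>, t). (ract \<eta> t, \<eta>)) ` topspace (subtopology HH ract_dom))"
    unfolding closed_map_def using closedin_topspace by blast
  moreover have "topspace (subtopology HH ract_dom) = ract_dom" using T_subset by auto
  ultimately have "closedin HH ((\<lambda>(\<eta>, t). (ract \<eta> t, \<eta>)) ` ract_dom)" by simp
  then show ?thesis by (simp only: orbit_rel_eq_image)
qed

lemma Hausdorff_space_Qtop: "Hausdorff_space Qtop"
  using Hausdorff_space_open_map_image[OF open_map_cls] closedin_orbit_rel by simp

lemma embedding_map_orbit_rel:
  "homeomorphic_map (subtopology HH ract_dom) (subtopology HH orbit_rel) (\<lambda>(\<eta>, t). (ract \<eta> t, \<eta>))"
proof -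
  have top: "topspace (subtopology HH ract_dom) = ract_dom" using T_subset by auto
  have "continuous_map (subtopology HH ract_dom) HH (\<lambda>(\<eta>, t). (ract \<eta> t, \<eta>))"
  proof -
    have "continuous_map (subtopology HH ract_dom) HH (\<lambda>z. ((\<lambda>(\<eta>, t). ract \<eta> t) z, fst z))"
      by (intro continuous_map_pairedI ract_continuous continuous_map_subtopology_fst)
    then show ?thesis by (rule continuous_map_eq) (simp add: case_prod_beta)
  qed
  moreover have "inj_on (\<lambda>(\<eta>, t). (ract \<eta> t, \<eta>)) (topspace (subtopology HH ract_dom))"
    unfolding top
  proof (rule inj_onI)
    fix z w assume z: "z \<in> ract_dom" and w: "w \<in> ract_dom"
      and eq: "(\<lambda>(\<eta>, t). (ract \<eta> t, \<eta>)) z = (\<lambda>(\<eta>, t). (ract \<eta> t, \<eta>)) w"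
    obtain \<eta> t \<eta>' t' where zw: "z = (\<eta>, t)" "w = (\<eta>', t')" by fastforce
    have "\<eta>' = \<eta>" "ract \<eta> t = ract \<eta> t'" using eq zw by auto
    then have "t = t'" using ract_cancel[of \<eta> t t'] z w zw by simp
    then show "z = w" using zw \<open>\<eta>' = \<eta>\<close> by simp
  qed
  ultimately have "embedding_map (subtopology HH ract_dom) HH (\<lambda>(\<eta>, t). (ract \<eta> t, \<eta>))"
    using injective_closed_imp_embedding_map proper_imp_closed_map[OF ract_proper] by blast
  then show ?thesis unfolding embedding_map_def top orbit_rel_eq_image .
qed

definition shift :: "'h \<times> 'h \<Rightarrow> 'h" where
  "shift z = (SOME t. t \<in> T \<and> p t = p (s (snd z)) \<and> ract (snd z) t = fst z)"

lemma shift_ract: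
  assumes \<eta>: "\<eta> \<in> H" and t: "t \<in> T" "p t = p (s \<eta>)"
  shows "shift (ract \<eta> t, \<eta>) = t"
proof -
  have "\<exists>u. u \<in> T \<and> p u = p (s \<eta>) \<and> ract \<eta> u = ract \<eta> t" using t by blast
  from someI_ex[OF this] have "shift (ract \<eta> t, \<eta>) \<in> T" "p (shift (ract \<eta> t, \<eta>)) = p (s \<eta>)"
      "ract \<eta> (shift (ract \<eta> t, \<eta>)) = ract \<eta> t"
    unfolding shift_def by simp_all
  then show ?thesis by (rule ract_cancel[OF \<eta> _ _ t])
qed

lemma shift_in_orbit_rel:
  assumes "(a, b) \<in> orbit_rel"
  shows "shift (a, b) \<in> T" "p (shift (a, b)) = p (s b)" "ract b (shift (a, b)) = a"
proof -
  from assms have "a \<in> H" "b \<in> H" "cls a = cls b" by auto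
  then have "b \<in> H" "a \<in> cls b" using orbit_class_eq_iff by simp_all
  moreover obtain t where "t \<in> T" "p t = p (s b)" "a = ract b t"
    using \<open>a \<in> cls b\<close> orbit_class_iff by blast
  ultimately show "shift (a, b) \<in> T" "p (shift (a, b)) = p (s b)" "ract b (shift (a, b)) = a"
    using shift_ract by simp_all
qed

lemma continuous_map_shift: "continuous_map (subtopology HH orbit_rel) Htop shift"
proof -
  obtain g where g: "homeomorphic_maps (subtopology HH ract_dom) (subtopology HH orbit_rel)
      (\<lambda>(\<eta>, t). (ract \<eta> t, \<eta>)) g"
    using embedding_map_orbit_rel homeomorphic_map_maps by blast
  have top: "topspace (subtopology HH ract_dom) = ract_dom" "topspace (subtopology HH orbit_rel) = orbit_rel"
    using T_subset by auto
  have g_cont: "continuous_map (subtopology HH orbit_rel) (subtopology HH ract_dom) g"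
    using g unfolding homeomorphic_maps_def by (elim conjE)
  have "\<forall>z \<in> orbit_rel. (\<lambda>(\<eta>, t). (ract \<eta> t, \<eta>)) (g z) = z"
    using g unfolding homeomorphic_maps_def top by (elim conjE) assumption
  then have g_inv: "(\<lambda>(\<eta>, t). (ract \<eta> t, \<eta>)) (g z) = z" if "z \<in> orbit_rel" for z
    using that by (rule bspec)
  have "g ` orbit_rel \<subseteq> ract_dom"
    using continuous_map_image_subset_topspace[OF g_cont] unfolding top .
  then have g_in_ract_dom: "g z \<in> ract_dom" if "z \<in> orbit_rel" for z
    using that by (rule subsetD[OF _ imageI])
  have "continuous_map (subtopology HH orbit_rel) Htop (snd \<circ> g)"
    using g_cont continuous_map_subtopology_snd by (rule continuous_map_compose)
  then show ?thesis
  proof (rule continuous_map_eq)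
    fix z assume "z \<in> topspace (subtopology HH orbit_rel)"
    then have z: "z \<in> orbit_rel" using top by simp
    obtain \<eta> t where gz: "g z = (\<eta>, t)" by (cases "g z")
    then have "\<eta> \<in> H" "t \<in> T" "p t = p (s \<eta>)" "z = (ract \<eta> t, \<eta>)"
      using g_in_ract_dom[OF z] g_inv[OF z] by auto
    then show "(snd \<circ> g) z = shift z" using shift_ract gz by simp
  qed
qed

lemma continuous_map_quot_lift_inv: "continuous_map Qtop Qtop (quot_lift cls i)"
proof (rule continuous_compose_quotient_map[OF quotient_map_cls])
  have "continuous_map Htop Qtop (cls \<circ> i)"
    using continuous_map_inv continuous_map_cls by (rule continuous_map_compose)
  then show "continuous_map Htop Qtop (quot_lift cls i \<circ> cls)"
    by (rule continuous_map_eq) (simp add: quot_lift_inv)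
qed

lemma continuous_map_quot_lift_r: "continuous_map Qtop Qtop (quot_lift cls r)"
proof (rule continuous_compose_quotient_map[OF quotient_map_cls])
  have "continuous_map Htop Qtop (cls \<circ> r)"
    using continuous_map_r continuous_map_cls by (rule continuous_map_compose)
  then show "continuous_map Htop Qtop (quot_lift cls r \<circ> cls)"
    by (rule continuous_map_eq) (simp add: quot_lift_r)
qed

text \<open>A continuous lift of the quotient multiplication: on pairs whose classes are composable,
  \<open>g\<close> is translated within its class until its source is \<open>r h\<close>.\<close>

definition mult_rep :: "'h \<times> 'h \<Rightarrow> 'h" where
  "mult_rep z = m (ract (fst z) (shift (r (snd z), s (fst z)))) (snd z)"

lemma mult_rep_composable:
  assumes g: "g \<in> H" and h: "h \<in> H" and rel: "(r h, s g) \<in> orbit_rel"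
  shows "(g, shift (r h, s g)) \<in> ract_dom"
    and "(ract g (shift (r h, s g)), h) \<in> H2"
    and "ract g (shift (r h, s g)) \<in> cls g"
proof -
  let ?d = "shift (r h, s g)"
  have d: "?d \<in> T" "p ?d = p (s g)" "ract (s g) ?d = r h"
    using shift_in_orbit_rel[OF rel] s_T[OF s_in_T[OF g]] by simp_all
  then show "(g, ?d) \<in> ract_dom" using g by simp
  have "s (ract g ?d) = r h" using s_ract[OF g d(1,2)] d(3) by simp
  then show "(ract g ?d, h) \<in> H2"
    using composable_if_s_eq_r ract_in[OF g d(1,2)] h by blast
  show "ract g ?d \<in> cls g" using ract_in_orbit_class[OF d(1,2)] .
qed

abbreviation "composable_lifts \<equiv> {z \<in> topspace HH. map_prod cls cls z \<in> Q2}"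

lemma mem_composable_lifts_iff: "(g, h) \<in> composable_lifts \<longleftrightarrow> g \<in> H \<and> h \<in> H \<and> (r h, s g) \<in> orbit_rel"
  using quot_composable_iff r_in s_in by auto

lemma quot_mult_mult_rep:
  assumes "z \<in> composable_lifts"
  shows "quot_mult H2 m (cls (fst z)) (cls (snd z)) = cls (mult_rep z)"
proof -
  obtain g h where z: "z = (g, h)" by fastforce
  then have g: "g \<in> H" and h: "h \<in> H" and rel: "(r h, s g) \<in> orbit_rel"
    using assms mem_composable_lifts_iff by auto
  note c = mult_rep_composable[OF g h rel]
  have "cls (ract g (shift (r h, s g))) = cls g" using orbit_class_eq[OF g c(3)] .
  then show ?thesis using quot_mult_orbit_class[OF c(2)] z by (simp add: mult_rep_def)
qed

lemma continuous_map_mult_rep: "continuous_map (subtopology HH composable_lifts) Htop mult_rep"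
proof -
  let ?L = "subtopology HH composable_lifts"
  have L: "fst z \<in> H" "snd z \<in> H" "(r (snd z), s (fst z)) \<in> orbit_rel" if "z \<in> topspace ?L" for z
    using that mem_composable_lifts_iff[of "fst z" "snd z"] by auto
  have "continuous_map ?L HH (\<lambda>z. (r (snd z), s (fst z)))"
    by (intro continuous_map_pairedI continuous_map_compose[OF continuous_map_subtopology_snd continuous_map_r, unfolded o_def]
        continuous_map_compose[OF continuous_map_subtopology_fst continuous_map_s, unfolded o_def])
  then have "continuous_map ?L (subtopology HH orbit_rel) (\<lambda>z. (r (snd z), s (fst z)))"
    using L(3) by (simp add: continuous_map_in_subtopology)
  from continuous_map_compose[OF this continuous_map_shift]
  have "continuous_map ?L Htop (\<lambda>z. shift (r (snd z), s (fst z)))" by (simp add: o_def)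
  then have "continuous_map ?L HH (\<lambda>z. (fst z, shift (r (snd z), s (fst z))))"
    by (intro continuous_map_pairedI continuous_map_subtopology_fst)
  then have "continuous_map ?L (subtopology HH ract_dom) (\<lambda>z. (fst z, shift (r (snd z), s (fst z))))"
    using mult_rep_composable(1)[OF L] by (simp add: continuous_map_in_subtopology)
  from continuous_map_compose[OF this ract_continuous]
  have "continuous_map ?L Htop (\<lambda>z. ract (fst z) (shift (r (snd z), s (fst z))))" by (simp add: o_def)
  then have "continuous_map ?L HH (\<lambda>z. (ract (fst z) (shift (r (snd z), s (fst z))), snd z))"
    by (intro continuous_map_pairedI continuous_map_subtopology_snd)
  then have "continuous_map ?L (subtopology HH H2) (\<lambda>z. (ract (fst z) (shift (r (snd z), s (fst z))), snd z))"
    using mult_rep_composable(2)[OF L] by (simp add: continuous_map_in_subtopology)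
  from continuous_map_compose[OF this continuous_map_mult]
  show ?thesis by (simp add: o_def mult_rep_def[abs_def])
qed

lemma continuous_map_quot_mult:
  "continuous_map (subtopology (prod_topology Qtop Qtop) Q2) Qtop (\<lambda>(A, B). quot_mult H2 m A B)"
proof -
  have "continuous_map HH (prod_topology Qtop Qtop) (map_prod cls cls)"
    using continuous_map_cls by (simp add: map_prod_def continuous_map_prod_top)
  moreover have "open_map HH (prod_topology Qtop Qtop) (map_prod cls cls)"
    using open_map_cls open_map_cls by (rule open_map_map_prod)
  moreover have "map_prod cls cls ` topspace HH = topspace (prod_topology Qtop Qtop)"
    by (simp add: map_prod_surj_on)
  ultimately have q: "quotient_map (subtopology HH composable_lifts) (subtopology (prod_topology Qtop Qtop) Q2)
      (map_prod cls cls)"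
    by (rule quotient_map_restriction_of_open_map)
  have "continuous_map (subtopology HH composable_lifts) Qtop (cls \<circ> mult_rep)"
    using continuous_map_mult_rep continuous_map_cls by (rule continuous_map_compose)
  then have "continuous_map (subtopology HH composable_lifts) Qtop ((\<lambda>(A, B). quot_mult H2 m A B) \<circ> map_prod cls cls)"
  proof (rule continuous_map_eq)
    fix z assume "z \<in> topspace (subtopology HH composable_lifts)"
    then have "z \<in> composable_lifts" by simp
    then show "(cls \<circ> mult_rep) z = ((\<lambda>(A, B). quot_mult H2 m A B) \<circ> map_prod cls cls) z"
      by (simp add: case_prod_beta quot_mult_mult_rep)
  qed
  then show ?thesis by (rule continuous_compose_quotient_map[OF q])
qed

text \<open>\<open>transport (x, y)\<close> moves \<open>y\<close> within its class until its range is \<open>r x\<close>.\<close>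

definition transport :: "'h \<times> 'h \<Rightarrow> 'h" where
  "transport z = lact (shift (r (fst z), r (snd z))) (snd z)"

abbreviation "range_rel \<equiv> {(x, y) \<in> H \<times> H. (r x, r y) \<in> orbit_rel}"

lemma transport_props:
  assumes x: "x \<in> H" and y: "y \<in> H" and rel: "(r x, r y) \<in> orbit_rel"
  shows "(shift (r x, r y), y) \<in> lact_dom" and "r (transport (x, y)) = r x"
    and "transport (x, y) \<in> cls y"
proof -
  let ?d = "shift (r x, r y)"
  have d: "?d \<in> T" "p ?d = p (r y)" "ract (r y) ?d = r x"
    using shift_in_orbit_rel[OF rel] s_T[OF r_in_T[OF y]] by simp_all
  then show "(?d, y) \<in> lact_dom" using y by simp
  show "r (transport (x, y)) = r x"
    using r_lact[OF d(1) y d(2)] lact_unit[OF r_in_T[OF y] d(1)] d r_T[OF r_in_T[OF y]]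
    by (simp add: transport_def)
  show "transport (x, y) \<in> cls y"
    using lact_in_orbit_class[OF d(1) y d(2)] by (simp add: transport_def)
qed

lemma transport_diag:
  assumes x: "x \<in> H"
  shows "(x, x) \<in> range_rel" and "transport (x, x) = x"
proof -
  show "(x, x) \<in> range_rel" using x r_in by simp
  have rx: "r x \<in> H" "s (r x) = r x" using r_in[OF x] s_T[OF r_in_T[OF x]] by auto
  then have "ract (r x) (te (p (r x))) = r x" using ract_te[OF rx(1)] by simp
  then have "shift (r x, r x) = te (p (r x))"
    using shift_ract[OF rx(1), of "te (p (r x))"] te_in[OF p_in[OF r_in_T[OF x]]] rx(2) by simp
  then show "transport (x, x) = x" using lact_te[OF x] by (simp add: transport_def)
qed

lemma continuous_map_transport: "continuous_map (subtopology HH range_rel) Htop transport"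
proof -
  let ?R = "subtopology HH range_rel"
  have R: "fst z \<in> H" "snd z \<in> H" "(r (fst z), r (snd z)) \<in> orbit_rel" if "z \<in> topspace ?R" for z
    using that by auto
  have "continuous_map ?R HH (\<lambda>z. (r (fst z), r (snd z)))"
    by (intro continuous_map_pairedI continuous_map_compose[OF continuous_map_subtopology_fst continuous_map_r, unfolded o_def]
        continuous_map_compose[OF continuous_map_subtopology_snd continuous_map_r, unfolded o_def])
  then have "continuous_map ?R (subtopology HH orbit_rel) (\<lambda>z. (r (fst z), r (snd z)))"
    using R(3) by (simp add: continuous_map_in_subtopology)
  from continuous_map_compose[OF this continuous_map_shift]
  have "continuous_map ?R Htop (\<lambda>z. shift (r (fst z), r (snd z)))" by (simp add: o_def)
  then have "continuous_map ?R HH (\<lambda>z. (shift (r (fst z), r (snd z)), snd z))"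
    by (intro continuous_map_pairedI continuous_map_subtopology_snd)
  then have "continuous_map ?R (subtopology HH lact_dom) (\<lambda>z. (shift (r (fst z), r (snd z)), snd z))"
    using transport_props(1)[OF R] by (simp add: continuous_map_in_subtopology)
  from continuous_map_compose[OF this lact_continuous]
  show ?thesis by (simp add: o_def transport_def[abs_def])
qed

lemma open_map_quot_lift_r: "open_map Qtop Qtop (quot_lift cls r)"
proof (rule open_map_descend[OF continuous_map_cls])
  show "cls ` topspace Htop = topspace Qtop" by simp
  have "open_map Htop Htop r"
    using etale by (simp add: hausdorff_etale_groupoid_def local_homeomorphism_imp_open_map)
  then show "open_map Htop Qtop (cls \<circ> r)"
    using open_map_cls by (rule open_map_compose)
  show "quot_lift cls r (cls x) = (cls \<circ> r) x" if "x \<in> topspace Htop" for x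
    using that by (simp add: quot_lift_r)
qed

lemma transport_neighbourhood:
  assumes V: "openin Htop V" "\<gamma> \<in> V"
  obtains N where "openin Htop N" "\<gamma> \<in> N" "N \<subseteq> V"
    "\<And>x y. x \<in> N \<Longrightarrow> y \<in> N \<Longrightarrow> (r x, r y) \<in> orbit_rel \<Longrightarrow> transport (x, y) \<in> V"
proof -
  have \<gamma>: "\<gamma> \<in> H" using V openin_subset by blast
  let ?P = "{z \<in> topspace (subtopology HH range_rel). transport z \<in> V}"
  have "openin (subtopology HH range_rel) ?P"
    using continuous_map_transport V(1) by (rule openin_continuous_map_preimage)
  then obtain W where W: "openin HH W" and W_eq: "?P = W \<inter> range_rel"
    unfolding openin_subtopology by blast
  have "(\<gamma>, \<gamma>) \<in> ?P" using transport_diag[OF \<gamma>] V(2) \<gamma> by simp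
  then have "(\<gamma>, \<gamma>) \<in> W" unfolding W_eq by blast
  then obtain N2 N1 where N: "openin Htop N2" "openin Htop N1" "\<gamma> \<in> N2" "\<gamma> \<in> N1" "N2 \<times> N1 \<subseteq> W"
    using W unfolding openin_prod_topology_alt by meson
  show thesis
  proof (rule that[of "N1 \<inter> N2 \<inter> V"])
    show "openin Htop (N1 \<inter> N2 \<inter> V)" using N(1,2) V(1) by (intro openin_Int)
    show "\<gamma> \<in> N1 \<inter> N2 \<inter> V" using N(3,4) V(2) by blast
    show "N1 \<inter> N2 \<inter> V \<subseteq> V" by blast
    fix x y assume x: "x \<in> N1 \<inter> N2 \<inter> V" and y: "y \<in> N1 \<inter> N2 \<inter> V" and rel: "(r x, r y) \<in> orbit_rel"
    have "x \<in> H" "y \<in> H" using x y V(1) openin_subset by blast+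
    moreover have "(x, y) \<in> W" using N(5) x y by blast
    ultimately have "(x, y) \<in> W \<inter> range_rel" using rel by simp
    then have "(x, y) \<in> ?P" unfolding W_eq .
    then show "transport (x, y) \<in> V" by simp
  qed
qed

text \<open>On an open bisection \<open>V\<close>, a point \<open>x\<close> near \<open>\<gamma>\<close> is the only point of \<open>V\<close> with range
  \<open>r x\<close>, so a nearby \<open>y\<close> whose range class is that of \<open>x\<close> is transported onto \<open>x\<close>.\<close>

lemma quot_lift_r_locally_injective:
  assumes A: "A \<in> Q"
  obtains U where "openin Qtop U" "A \<in> U" "inj_on (quot_lift cls r) U"
proof -
  obtain \<gamma> where \<gamma>: "\<gamma> \<in> H" "A = cls \<gamma>" using A by blast
  obtain V where V: "openin Htop V" "\<gamma> \<in> V"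
      "homeomorphic_map (subtopology Htop V) (subtopology Htop (r ` V)) r"
    using etale \<gamma>(1) unfolding hausdorff_etale_groupoid_def local_homeomorphism_def by blast
  have VH: "V \<subseteq> H" using V(1) by (rule openin_subset)
  have r_inj: "inj_on r V"
    using homeomorphic_imp_injective_map[OF V(3)] VH by (simp add: Int_absorb1)
  obtain N where N: "openin Htop N" "\<gamma> \<in> N" "N \<subseteq> V"
      and transport_in: "\<And>x y. x \<in> N \<Longrightarrow> y \<in> N \<Longrightarrow> (r x, r y) \<in> orbit_rel \<Longrightarrow> transport (x, y) \<in> V"
    using transport_neighbourhood[OF V(1,2)] by blast
  have "inj_on (quot_lift cls r) (cls ` N)"
  proof (rule inj_onI)
    fix B C assume "B \<in> cls ` N" "C \<in> cls ` N" and eq: "quot_lift cls r B = quot_lift cls r C"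
    then obtain x y where x: "x \<in> N" "C = cls x" and y: "y \<in> N" "B = cls y" by blast
    have xH: "x \<in> H" and yH: "y \<in> H" using x(1) y(1) N(3) VH by auto
    have "cls (r x) = cls (r y)" using eq x(2) y(2) quot_lift_r[OF xH] quot_lift_r[OF yH] by simp
    then have rel: "(r x, r y) \<in> orbit_rel" using r_in xH yH by simp
    have "transport (x, y) \<in> V" "x \<in> V" using transport_in[OF x(1) y(1) rel] x(1) N(3) by auto
    moreover have "r (transport (x, y)) = r x" by (rule transport_props(2)[OF xH yH rel])
    ultimately have "transport (x, y) = x" using r_inj by (simp add: inj_on_eq_iff)
    then have "x \<in> cls y" using transport_props(3)[OF xH yH rel] by simp
    then show "B = C" using orbit_class_eq[OF yH] x(2) y(2) by simp
  qed
  moreover have "openin Qtop (cls ` N)" using open_map_cls N(1) by (simp add: open_map_def)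
  moreover have "A \<in> cls ` N" using \<gamma> N(2) by blast
  ultimately show thesis using that by blast
qed

lemma local_homeomorphism_quot_lift_r: "local_homeomorphism Qtop Qtop (quot_lift cls r)"
  using continuous_map_quot_lift_r open_map_quot_lift_r
proof (rule local_homeomorphism_if_locally_injective)
  fix A assume "A \<in> topspace Qtop"
  then obtain U where "openin Qtop U" "A \<in> U" "inj_on (quot_lift cls r) U"
    using quot_lift_r_locally_injective by (metis topspace_Qtop)
  then show "\<exists>U. openin Qtop U \<and> A \<in> U \<and> inj_on (quot_lift cls r) U" by blast
qed

theorem hausdorff_etale_groupoid_orbit_space:
  "hausdorff_etale_groupoid Qtop Q2 (quot_mult H2 m) (quot_lift cls i) (quot_lift cls r) (quot_lift cls s)"
  unfolding hausdorff_etale_groupoid_def topological_groupoid_def topspace_Qtop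
  using groupoid_orbit_space continuous_map_quot_mult continuous_map_quot_lift_inv
    Hausdorff_space_Qtop local_homeomorphism_quot_lift_r by blast

end

theorem mainTheorem11:
  fixes Htop :: "'h topology" and X :: "'x topology"
    and H2 :: "('h \<times> 'h) set" and m :: "'h \<Rightarrow> 'h \<Rightarrow> 'h" and i r s :: "'h \<Rightarrow> 'h"
    and p :: "'h \<Rightarrow> 'x" and tm :: "'h \<Rightarrow> 'h \<Rightarrow> 'h" and te :: "'x \<Rightarrow> 'h" and ti :: "'h \<Rightarrow> 'h"
    and lact ract lam rho :: "'h \<Rightarrow> 'h \<Rightarrow> 'h"
  assumes A: "standing_assumption Htop H2 m i r s X p tm te ti lact ract lam rho"
  defines "H \<equiv> topspace Htop"
    and "T \<equiv> unit_space (topspace Htop) r"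
    and "cls \<equiv> orbit_class (unit_space (topspace Htop) r) p s ract"
  shows
    "hausdorff_etale_groupoid (quotient_topology Htop cls)
        (quot_composable H2 (cls ` H)) (quot_mult H2 m)
        (quot_lift cls i) (quot_lift cls r) (quot_lift cls s)
     \<and> topspace (quotient_topology Htop cls) = cls ` H
     \<and> (\<forall>A B \<gamma>' \<eta>'. (A, B) \<in> quot_composable H2 (cls ` H) \<and> \<gamma>' \<in> A \<and> \<eta>' \<in> B \<and> (\<gamma>', \<eta>') \<in> H2
          \<longrightarrow> quot_mult H2 m A B = cls (m \<gamma>' \<eta>'))
     \<and> (\<forall>\<gamma> \<in> H. quot_lift cls i (cls \<gamma>) = cls (i \<gamma>))
     \<and> (\<forall>\<gamma> \<in> H. quot_lift cls r (cls \<gamma>) = cls (r \<gamma>))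
     \<and> (\<forall>\<gamma> \<in> H. quot_lift cls s (cls \<gamma>) = cls (s \<gamma>))"
proof -
  interpret bundle_action_groupoid Htop H2 m i r s T X p tm te ti lact ract lam rho
    using standing_assumption_imp_bundle_action_groupoid[OF A] unfolding T_def .
  show ?thesis
    unfolding H_def cls_def T_def[symmetric]
    using hausdorff_etale_groupoid_orbit_space quot_mult_eq quot_lift_inv quot_lift_r quot_lift_s
    by simp
qed

end
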